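(* Let $\hat H_0$ and $\hat V$ be Hermitian operators on a finite-dimensional Hilbert space, let $\hat\rho(0)$ be a density matrix, let $\hat O$ be a Hermitian observable, and fix a time $t\ge 0$. Let $\{\mathcal D_\theta\}_{\theta\ge 0}$ be a mitigable family of probability distributions for a real random variable $\delta$. For $\theta\ge0$ set $$\hat\rho_\theta(t)=\mathbb E_{\theta}\!\left[e^{-it(\hat H_0+\delta\hat V)}\hat\rho(0)e^{it(\hat H_0+\delta\hat V)}\right],$$ where $\mathbb E_\theta$ denotes expectation over $\delta\sim\mathcal D_\theta$. Let $0\le\theta_0<\theta_1<\dots<\theta_r$ be $r+1$ distinct noise strengths, and suppose that for each $i$ one has a noisy estimator $\tilde E_{\theta_i,t}=\mathrm{Tr}(\hat O\hat\rho_{\theta_i}(t))+\xi_i$, where the projection noise $\xi_i$ is normally distributed with mean $0$ and variance $\nu_i^2$. Define the Richardson extrapolator $\tilde E_{0,t}=\sum_{i=0}^r\gamma_i\tilde E_{\theta_i,t}$ with $\gamma_i=\prod_{k\neq i}\frac{\theta_k}{\theta_k-\theta_i}$. Then, for $\epsilon\in(0,1)$, with probability $1-\epsilon$, $$\big|\tilde E_{0,t}-\mathrm{Tr}(\hat O\hat\rho_0(t))\big|\le\sum_{i=0}^r|\gamma_i|\Big(|R_{r+1}(\mathcal D_{\theta_i},t,\hat V)|+c_i\Big),$$ where $c_i=\sqrt2\,\nu_i\,\mathrm{erf}^{-1}(1-\epsilon)$ and the remainder satisfies $$|R_{r+1}(\mathcal D_{\theta_i},t,\hat V)|\le\|\hat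 O\|_\infty\frac{(2t)^{r+1}\|\hat V\|_\infty^{r+1}\,\mathbb E_{\theta_i}\big[|\delta^{r+1}|\big]}{(r+1)!}.$$
   Context: A family $\{\mathcal D_\theta\}_{\theta\ge0}$ of distributions of a real random variable $\delta$ is called mitigable (with respect to $\theta$) if $\theta=0$ corresponds to $\delta=0$ with probability one, and for every positive integer $k$ the moment $\mathbb E_\theta[\delta^k]=\int\delta^k\mathcal D_\theta(\delta)\,d\delta$ is a polynomial $p_k(\theta)$ in $\theta$ of degree at most $k$. This models shot-to-shot noise: in each repetition of an experiment the Hamiltonian is $\hat H_0+\delta\hat V$ with $\delta$ drawn independently from $\mathcal D_\theta$. $\|\cdot\|_\infty$ denotes the spectral (operator) norm. Interaction picture: $\hat U_0(s)=e^{-i\hat H_0 s}$, $\hat A_I(s)=\hat U_0(s)^\dagger\hat A\hat U_0(s)$. For $k\ge1$ let $$a_k=(-i)^k\int_0^t dt_1\int_0^{t_1}dt_2\cdots\int_0^{t_{k-1}}dt_k\,\mathrm{Tr}\Big(\hat O_I(t)[\hat V_I(t_1),[\hat V_I(t_2),[\dots,[\hat V_I(t_k),\hat\rho(0)]\dots]]]\Big),$$ and $a_0=\mathrm{Tr}(\hat O\,\hat U_0(t)\hat\rho(0)\hat U_0(t)^\dagger)$. The remainder is $R_{r+1}(\mathcal D_\theta,t,\hat V)=\mathrm{Tr}(\hat O\hat\rho_\theta(t))-\sum_{k=0}^{r}\mathbb E_\theta[\delta^k]a_k$ (the expectation over $\mathcal D_\theta$ of the $(r+1)$-st order remainder of the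 Dyson series of $\mathrm{Tr}(\hat O\,e^{-it(\hat H_0+\delta\hat V)}\hat\rho(0)e^{it(\hat H_0+\delta\hat V)})$ in powers of $\delta$). *)

theory Defs
  imports "HOL-Probability.Probability" "HOL-Computational_Algebra.Polynomial"
begin

text \<open>Operators on a finite-dimensional Hilbert space C^n are complex n x n matrices,
  with the dimension given by a finite index type 'n.\<close>

definition cmat_scale :: "complex \<Rightarrow> complex^'n^'n \<Rightarrow> complex^'n^'n" where
  "cmat_scale c A = (\<chi> i j. c * A $ i $ j)"

definition adjoint :: "complex^'n^'n \<Rightarrow> complex^'n^'n" where
  "adjoint A = (\<chi> i j. cnj (A $ j $ i))"

definition hermitian :: "complex^'n^'n \<Rightarrow> bool" where
  "hermitian A \<longleftrightarrow> adjoint A = A"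

definition cinner :: "complex^'n \<Rightarrow> complex^'n \<Rightarrow> complex" where
  "cinner x y = (\<Sum>i\<in>UNIV. cnj (x $ i) * y $ i)"

definition density_matrix :: "complex^'n^'n \<Rightarrow> bool" where
  "density_matrix A \<longleftrightarrow> hermitian A \<and> (\<forall>x. Re (cinner x (A *v x)) \<ge> 0) \<and> trace A = 1"

fun mpow :: "complex^'n^'n \<Rightarrow> nat \<Rightarrow> complex^'n^'n" where
  "mpow A 0 = mat 1"
| "mpow A (Suc k) = A ** mpow A k"

definition mexp :: "complex^'n^'n \<Rightarrow> complex^'n^'n" where
  "mexp A = (\<Sum>k. cmat_scale (of_real (1 / fact k)) (mpow A k))"

definition spec_norm :: "complex^'n^'n \<Rightarrow> real" where
  "spec_norm A = onorm (\<lambda>x. A *v x)"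

definition commutator :: "complex^'n^'n \<Rightarrow> complex^'n^'n \<Rightarrow> complex^'n^'n" where
  "commutator A B = A ** B - B ** A"

definition U0 :: "complex^'n^'n \<Rightarrow> real \<Rightarrow> complex^'n^'n" where
  "U0 H0 s = mexp (cmat_scale (- \<i> * of_real s) H0)"

definition interaction :: "complex^'n^'n \<Rightarrow> complex^'n^'n \<Rightarrow> real \<Rightarrow> complex^'n^'n" where
  "interaction H0 A s = adjoint (U0 H0 s) ** A ** U0 H0 s"

fun nested_comm :: "complex^'n^'n \<Rightarrow> complex^'n^'n \<Rightarrow> complex^'n^'n \<Rightarrow> real list \<Rightarrow> complex^'n^'n" where
  "nested_comm H0 V \<rho> [] = \<rho>"
| "nested_comm H0 V \<rho> (\<tau> # ts) = commutator (interaction H0 V \<tau>) (nested_comm H0 V \<rho> ts)"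

fun simplex_int :: "nat \<Rightarrow> real \<Rightarrow> (real list \<Rightarrow> complex) \<Rightarrow> complex" where
  "simplex_int 0 s f = f []"
| "simplex_int (Suc k) s f = integral {0..s} (\<lambda>\<tau>. simplex_int k \<tau> (\<lambda>ts. f (\<tau> # ts)))"

definition evolve :: "complex^'n^'n \<Rightarrow> complex^'n^'n \<Rightarrow> complex^'n^'n \<Rightarrow> real \<Rightarrow> real \<Rightarrow> complex^'n^'n" where
  "evolve H0 V \<rho> t \<delta> =
     (let U = mexp (cmat_scale (- \<i> * of_real t) (H0 + cmat_scale (of_real \<delta>) V)) in U ** \<rho> ** adjoint U)"

definition dyson_coeff :: "complex^'n^'n \<Rightarrow> complex^'n^'n \<Rightarrow> complex^'n^'n \<Rightarrow> complex^'n^'n \<Rightarrow> real \<Rightarrow> nat \<Rightarrow> complex" where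
  "dyson_coeff H0 V \<rho> Obs t k =
     (if k = 0 then trace (Obs ** U0 H0 t ** \<rho> ** adjoint (U0 H0 t))
      else (- \<i>) ^ k * simplex_int k t (\<lambda>ts. trace (interaction H0 Obs t ** nested_comm H0 V \<rho> ts)))"

definition avg_state :: "real measure \<Rightarrow> complex^'n^'n \<Rightarrow> complex^'n^'n \<Rightarrow> complex^'n^'n \<Rightarrow> real \<Rightarrow> complex^'n^'n" where
  "avg_state D H0 V \<rho> t = (\<chi> i j. integral\<^sup>L D (\<lambda>\<delta>. evolve H0 V \<rho> t \<delta> $ i $ j))"

definition remainder :: "nat \<Rightarrow> real measure \<Rightarrow> complex^'n^'n \<Rightarrow> complex^'n^'n \<Rightarrow> complex^'n^'n \<Rightarrow> complex^'n^'n \<Rightarrow> real \<Rightarrow> complex" where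
  "remainder r D H0 V \<rho> Obs t =
     trace (Obs ** avg_state D H0 V \<rho> t)
     - (\<Sum>k\<le>r. of_real (integral\<^sup>L D (\<lambda>\<delta>. \<delta> ^ k)) * dyson_coeff H0 V \<rho> Obs t k)"

definition mitigable :: "(real \<Rightarrow> real measure) \<Rightarrow> bool" where
  "mitigable D \<longleftrightarrow>
     (\<forall>\<theta>\<ge>0. prob_space (D \<theta>) \<and> sets (D \<theta>) = sets borel) \<and>
     (AE \<delta> in D 0. \<delta> = 0) \<and>
     (\<forall>k\<ge>1. (\<forall>\<theta>\<ge>0. integrable (D \<theta>) (\<lambda>\<delta>. \<delta> ^ k)) \<and>
        (\<exists>p :: real poly. degree p \<le> k \<and> (\<forall>\<theta>\<ge>0. integral\<^sup>L (D \<theta>) (\<lambda>\<delta>. \<delta> ^ k) = poly p \<theta>)))"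

definition erf :: "real \<Rightarrow> real" where
  "erf x = 2 / sqrt pi * (LBINT s=0..x. exp (- (s\<^sup>2)))"

definition erf_inv :: "real \<Rightarrow> real" where
  "erf_inv y = (THE x. erf x = y)"

definition richardson_coeff :: "nat \<Rightarrow> (nat \<Rightarrow> real) \<Rightarrow> nat \<Rightarrow> real" where
  "richardson_coeff r \<theta> i = (\<Prod>k\<in>{0..r} - {i}. \<theta> k / (\<theta> k - \<theta> i))"

end

theory Submission
  imports Defs
begin

text \<open>For a fixed noise value \<open>\<delta>\<close> the interaction picture state solves
  \<open>\<rho>\<^sub>I(s) = \<rho> - i\<delta> \<integral>\<^sub>0\<^sup>s [V\<^sub>I, \<rho>\<^sub>I]\<close>; iterating this equation \<open>r + 1\<close> times gives the Dyson
  series to order \<open>r\<close> plus a remainder that is an \<open>(r + 1)\<close>-fold commutator integral. Each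
  commutator with \<open>V\<^sub>I\<close> costs \<open>2\<parallel>V\<parallel>\<close>, the simplex has volume \<open>t\<^sup>r\<^sup>+\<^sup>1/(r + 1)!\<close>, and
  \<open>|tr (C \<rho>\<^sub>I)| \<le> \<parallel>C\<parallel>\<close> because \<open>\<rho>\<^sub>I\<close> is a unitary conjugate of a density matrix; averaging over
  \<open>\<delta>\<close> bounds \<open>R\<^sub>r\<^sub>+\<^sub>1\<close>. For a mitigable family the averaged Dyson terms \<open>E\<^sub>\<theta>[\<delta>\<^sup>k] a\<^sub>k\<close>,
  \<open>k \<le> r\<close>, are polynomials of degree at most \<open>r\<close> in \<open>\<theta>\<close>, which the Lagrange weights \<open>\<gamma>\<^sub>i\<close>
  extrapolate exactly to \<open>\<theta> = 0\<close>. So the error of the estimator is \<open>\<Sum> \<gamma>\<^sub>i R\<^sub>r\<^sub>+\<^sub>1(\<theta>\<^sub>i)\<close> plus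
  the centred normal variable \<open>\<Sum> \<gamma>\<^sub>i \<xi>\<^sub>i\<close>, whose standard deviation is at most \<open>\<Sum> |\<gamma>\<^sub>i| \<nu>\<^sub>i\<close>.\<close>

section \<open>The spectral norm\<close>

lemma bounded_linear_mult_vec: "bounded_linear (\<lambda>x. (A::complex^'n^'n) *v x)"
  by simp

lemma norm_mult_vec_le_spec_norm: "norm ((A::complex^'n^'n) *v x) \<le> spec_norm A * norm x"
  unfolding spec_norm_def by (rule onorm[OF bounded_linear_mult_vec])

lemma spec_norm_eq_0_iff: "spec_norm (A::complex^'n^'n) = 0 \<longleftrightarrow> A = 0"
  unfolding spec_norm_def
  by (subst onorm_eq_0[OF bounded_linear_mult_vec]) (metis matrix_eq matrix_vector_mult_0)

lemma spec_norm_triangle: "spec_norm ((A::complex^'n^'n) + B) \<le> spec_norm A + spec_norm B"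
proof -
  have "((*v) (A + B)) = (\<lambda>x. A *v x + B *v x)"
    by (rule ext) (simp add: matrix_vector_mult_add_rdistrib)
  then show ?thesis
    unfolding spec_norm_def
    by (simp only: onorm_triangle[OF bounded_linear_mult_vec[of A] bounded_linear_mult_vec[of B]])
qed

lemma spec_norm_scaleR: "spec_norm ((r::real) *\<^sub>R (A::complex^'n^'n)) = \<bar>r\<bar> * spec_norm A"
proof -
  have "((*v) (r *\<^sub>R A)) = (\<lambda>x. r *\<^sub>R (A *v x))"
    by (rule ext) (simp add: vec_eq_iff matrix_vector_mult_def scaleR_sum_right)
  then show ?thesis
    unfolding spec_norm_def by (simp only: onorm_scaleR[OF bounded_linear_mult_vec[of A]])
qed

lemma spec_norm_mult: "spec_norm ((A::complex^'n^'n) ** B) \<le> spec_norm A * spec_norm B"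
proof -
  have "((*v) (A ** B)) = ((*v) A) \<circ> ((*v) B)"
    by (rule ext) (simp add: matrix_vector_mul_assoc)
  then show ?thesis
    unfolding spec_norm_def
    by (simp only: onorm_compose[OF bounded_linear_mult_vec[of A] bounded_linear_mult_vec[of B]])
qed

lemma spec_norm_mat_1: "spec_norm (mat 1 :: complex^'n^'n) = 1"
proof -
  have "((*v) (mat 1 :: complex^'n^'n)) = (\<lambda>x. x)" by (rule ext) simp
  then show ?thesis unfolding spec_norm_def by (simp only: onorm_id)
qed

lemma norm_le_sum_abs_components: "norm (x::complex^'n) \<le> (\<Sum>i\<in>UNIV. cmod (x $ i))"
  by (simp add: norm_vec_def L2_set_le_sum)

lemma matrix_entry_le_spec_norm: "cmod ((A::complex^'n^'n) $ i $ j) \<le> spec_norm A"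
proof -
  have "(A *v axis j 1) $ i = A $ i $ j"
    by (simp add: matrix_vector_mult_def axis_def if_distrib if_distribR cong: if_cong)
  then have "cmod (A $ i $ j) \<le> norm (A *v axis j (1::complex))"
    using Finite_Cartesian_Product.norm_nth_le[of "A *v axis j (1::complex)" i] by simp
  also have "\<dots> \<le> spec_norm A * norm (axis j (1::complex))"
    by (rule norm_mult_vec_le_spec_norm)
  finally show ?thesis by (simp add: inner_axis' norm_eq_1)
qed

lemma spec_norm_le_sum_entries:
  "spec_norm (A::complex^'n^'n) \<le> (\<Sum>i\<in>UNIV. \<Sum>j\<in>UNIV. cmod (A $ i $ j))"
  unfolding spec_norm_def
proof (rule onorm_le)
  fix x :: "complex^'n"
  have "norm (A *v x) \<le> (\<Sum>i\<in>UNIV. cmod ((A *v x) $ i))" by (rule norm_le_sum_abs_components)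
  also have "\<dots> \<le> (\<Sum>i\<in>UNIV. \<Sum>j\<in>UNIV. cmod (A $ i $ j) * norm x)"
  proof (rule sum_mono)
    fix i
    have "cmod ((A *v x) $ i) \<le> (\<Sum>j\<in>UNIV. cmod (A $ i $ j * x $ j))"
      unfolding matrix_vector_mult_def by (simp add: norm_sum)
    also have "\<dots> \<le> (\<Sum>j\<in>UNIV. cmod (A $ i $ j) * norm x)"
      by (intro sum_mono) (simp add: norm_mult mult_left_mono Finite_Cartesian_Product.norm_nth_le)
    finally show "cmod ((A *v x) $ i) \<le> (\<Sum>j\<in>UNIV. cmod (A $ i $ j) * norm x)" .
  qed
  finally show "norm (A *v x) \<le> (\<Sum>i\<in>UNIV. \<Sum>j\<in>UNIV. cmod (A $ i $ j)) * norm x"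
    by (simp add: sum_distrib_right)
qed

lemma norm_le_spec_norm: "norm (A::complex^'n^'n) \<le> real CARD('n) * real CARD('n) * spec_norm A"
proof -
  have "norm A \<le> (\<Sum>i\<in>UNIV. norm (A $ i))" by (simp add: norm_vec_def L2_set_le_sum)
  also have "\<dots> \<le> (\<Sum>i\<in>(UNIV::'n set). \<Sum>j\<in>(UNIV::'n set). spec_norm A)"
    by (intro sum_mono order.trans[OF norm_le_sum_abs_components] matrix_entry_le_spec_norm)
  finally show ?thesis by simp
qed

lemma spec_norm_le_norm: "spec_norm (A::complex^'n^'n) \<le> real CARD('n) * real CARD('n) * norm A"
proof -
  have "spec_norm A \<le> (\<Sum>i\<in>(UNIV::'n set). \<Sum>j\<in>(UNIV::'n set). norm A)"
    by (intro order.trans[OF spec_norm_le_sum_entries] sum_mono)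
       (rule order.trans[OF Finite_Cartesian_Product.norm_nth_le Finite_Cartesian_Product.norm_nth_le])
  then show ?thesis by simp
qed

lemma cinner_mult_vec_left: "cinner ((A::complex^'n^'n) *v x) y = cinner x (adjoint A *v y)"
  unfolding cinner_def matrix_vector_mult_def adjoint_def
  by (simp add: sum_distrib_left sum_distrib_right mult_ac) (rule sum.swap)

lemma power2_norm_eq_cinner: "(norm (x::complex^'n))\<^sup>2 = Re (cinner x x)"
  by (simp add: power2_norm_eq_inner inner_vec_def cinner_def inner_complex_def)

lemma adjoint_adjoint [simp]: "adjoint (adjoint (A::complex^'n^'n)) = A"
  by (simp add: adjoint_def vec_eq_iff)

lemma spec_norm_adjoint_le: "spec_norm (adjoint (A::complex^'n^'n)) \<le> spec_norm A"
  unfolding spec_norm_def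
proof (rule onorm_le)
  fix x :: "complex^'n"
  let ?y = "adjoint A *v x"
  have "(norm ?y)\<^sup>2 = Re (cinner x (A *v ?y))"
    using cinner_mult_vec_left[of "adjoint A" x ?y] by (simp add: power2_norm_eq_cinner)
  also have "\<dots> = inner x (A *v ?y)"
    by (simp add: inner_vec_def cinner_def inner_complex_def)
  also have "\<dots> \<le> norm x * norm (A *v ?y)"
    by (rule norm_cauchy_schwarz)
  also have "\<dots> \<le> norm x * (onorm ((*v) A) * norm ?y)"
    by (intro mult_left_mono onorm[OF bounded_linear_mult_vec]) simp
  finally have "norm ?y * norm ?y \<le> norm ?y * (onorm ((*v) A) * norm x)"
    by (simp add: power2_eq_square mult_ac)
  then show "norm ?y \<le> onorm ((*v) A) * norm x"
    using onorm_pos_le[OF bounded_linear_mult_vec[of A]]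
    by (cases "norm ?y = 0") auto
qed

lemma spec_norm_unitary_le:
  assumes "adjoint U ** U = mat 1"
  shows "spec_norm (U::complex^'n^'n) \<le> 1"
  unfolding spec_norm_def
proof (rule onorm_le)
  fix x :: "complex^'n"
  have "(norm (U *v x))\<^sup>2 = (norm x)\<^sup>2"
    by (simp add: power2_norm_eq_cinner cinner_mult_vec_left matrix_vector_mul_assoc assms)
  then show "norm (U *v x) \<le> 1 * norm x" by simp
qed

section \<open>Square matrices as a Banach algebra\<close>

text \<open>Equipping \<open>complex^'n^'n\<close> with the spectral norm as a copy type gives access to the
  library's exponential, integrals and derivatives in a Banach algebra.\<close>

typedef ('n::finite) sqmat = "UNIV :: (complex^'n^'n) set" by auto

setup_lifting type_definition_sqmat

instantiation sqmat :: (finite) ab_group_add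
begin
lift_definition zero_sqmat :: "'a sqmat" is 0 .
lift_definition plus_sqmat :: "'a sqmat \<Rightarrow> 'a sqmat \<Rightarrow> 'a sqmat" is "(+)" .
lift_definition minus_sqmat :: "'a sqmat \<Rightarrow> 'a sqmat \<Rightarrow> 'a sqmat" is "(-)" .
lift_definition uminus_sqmat :: "'a sqmat \<Rightarrow> 'a sqmat" is uminus .
instance by standard (transfer; simp add: algebra_simps)+
end

instantiation sqmat :: (finite) real_vector
begin
lift_definition scaleR_sqmat :: "real \<Rightarrow> 'a sqmat \<Rightarrow> 'a sqmat" is scaleR .
instance by standard (transfer; simp add: scaleR_add_right scaleR_add_left)+
end

lemma matrix_mul_scaleR_left: "(r *\<^sub>R (A::complex^'n^'n)) ** B = r *\<^sub>R (A ** B)"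
  and matrix_mul_scaleR_right: "A ** (r *\<^sub>R B) = r *\<^sub>R (A ** B)"
  by (simp_all add: matrix_matrix_mult_def vec_eq_iff scaleR_sum_right)

lemma matrix_add_rdistrib: "((B::complex^'n^'n) + C) ** A = B ** A + C ** A"
  by (simp add: matrix_matrix_mult_def vec_eq_iff sum.distrib distrib_right)

lemma mat_1_neq_0: "(mat 1 :: complex^'n^'n) \<noteq> 0"
proof
  assume "(mat 1 :: complex^'n^'n) = 0"
  then have "(mat 1 :: complex^'n^'n) $ undefined $ undefined = 0" by simp
  then show False by (simp add: mat_def)
qed

instantiation sqmat :: (finite) ring_1
begin
lift_definition times_sqmat :: "'a sqmat \<Rightarrow> 'a sqmat \<Rightarrow> 'a sqmat" is "(**)" .
lift_definition one_sqmat :: "'a sqmat" is "mat 1" .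
instance
  by standard
    (transfer; simp add: matrix_mul_assoc matrix_add_ldistrib matrix_add_rdistrib mat_1_neq_0)+
end

instantiation sqmat :: (finite) real_normed_algebra_1
begin
lift_definition norm_sqmat :: "'a sqmat \<Rightarrow> real" is spec_norm .
definition sgn_sqmat :: "'a sqmat \<Rightarrow> 'a sqmat" where "sgn_sqmat x = x /\<^sub>R norm x"
definition dist_sqmat :: "'a sqmat \<Rightarrow> 'a sqmat \<Rightarrow> real" where "dist_sqmat x y = norm (x - y)"
definition uniformity_sqmat :: "('a sqmat \<times> 'a sqmat) filter" where
  "uniformity_sqmat = (INF e\<in>{0<..}. principal {(x, y). dist x y < e})"
definition open_sqmat :: "'a sqmat set \<Rightarrow> bool" where
  "open_sqmat U = (\<forall>x\<in>U. \<forall>\<^sub>F (x', y) in uniformity. x' = x \<longrightarrow> y \<in> U)"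
instance
proof
  fix x y :: "'a sqmat" and r :: real
  show "(norm x = 0) = (x = 0)" by transfer (rule spec_norm_eq_0_iff)
  show "norm (x + y) \<le> norm x + norm y" by transfer (rule spec_norm_triangle)
  show "norm (r *\<^sub>R x) = \<bar>r\<bar> * norm x" by transfer (rule spec_norm_scaleR)
  show "norm (x * y) \<le> norm x * norm y" by transfer (rule spec_norm_mult)
  show "r *\<^sub>R x * y = r *\<^sub>R (x * y)" by transfer (rule matrix_mul_scaleR_left)
  show "x * r *\<^sub>R y = r *\<^sub>R (x * y)" by transfer (rule matrix_mul_scaleR_right)
  show "norm (1::'a sqmat) = 1" by transfer (rule spec_norm_mat_1)
qed (simp_all add: dist_sqmat_def sgn_sqmat_def uniformity_sqmat_def open_sqmat_def)
end

lemma bounded_linear_Rep_sqmat: "bounded_linear (Rep_sqmat :: 'a::finite sqmat \<Rightarrow> _)"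
proof (rule bounded_linear_intro[where K="real CARD('a) * real CARD('a)"])
  show "norm (Rep_sqmat x) \<le> norm x * (real CARD('a) * real CARD('a))" for x :: "'a sqmat"
    using norm_le_spec_norm[of "Rep_sqmat x"] by (simp add: norm_sqmat.rep_eq algebra_simps)
qed (transfer, simp)+

lemma bounded_linear_Abs_sqmat: "bounded_linear (Abs_sqmat :: _ \<Rightarrow> 'a::finite sqmat)"
proof (rule bounded_linear_intro[where K="real CARD('a) * real CARD('a)"])
  show "norm (Abs_sqmat x :: 'a sqmat) \<le> norm x * (real CARD('a) * real CARD('a))" for x
    using spec_norm_le_norm[of x] by (simp add: norm_sqmat.abs_eq algebra_simps)
qed (simp_all add: plus_sqmat.abs_eq scaleR_sqmat.abs_eq)

instance sqmat :: (finite) banach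
proof
  fix X :: "nat \<Rightarrow> 'a sqmat"
  assume "Cauchy X"
  then obtain L where "(\<lambda>n. Rep_sqmat (X n)) \<longlonglongrightarrow> L"
    using bounded_linear.Cauchy[OF bounded_linear_Rep_sqmat] Cauchy_convergent_iff convergent_def
    by blast
  then have "(\<lambda>n. Abs_sqmat (Rep_sqmat (X n))) \<longlonglongrightarrow> Abs_sqmat L"
    by (rule bounded_linear.tendsto[OF bounded_linear_Abs_sqmat])
  then show "convergent X" by (auto simp: Rep_sqmat_inverse convergent_def)
qed

lemma continuous_on_Rep_sqmat [continuous_intros]:
  "continuous_on S f \<Longrightarrow> continuous_on S (\<lambda>x. Rep_sqmat (f x))"
  using bounded_linear.continuous_on[OF bounded_linear_Rep_sqmat] by blast

lift_definition adj :: "'n::finite sqmat \<Rightarrow> 'n sqmat" is adjoint .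
lift_definition tr :: "'n::finite sqmat \<Rightarrow> complex" is trace .
lift_definition cscale :: "complex \<Rightarrow> 'n::finite sqmat \<Rightarrow> 'n sqmat" is cmat_scale .

lemma adj_mult: "adj (x * y) = adj y * adj x"
  by transfer (simp add: adjoint_def vec_eq_iff matrix_matrix_mult_def mult.commute)

lemma adj_add: "adj (x + y) = adj x + adj y"
  and adj_diff: "adj (x - y) = adj x - adj y"
  and adj_scaleR: "adj (r *\<^sub>R x) = r *\<^sub>R adj x"
  and adj_adj [simp]: "adj (adj x) = x"
  and adj_one [simp]: "adj 1 = 1"
  and adj_cscale: "adj (cscale z x) = cscale (cnj z) (adj x)"
  by (transfer; simp add: adjoint_def cmat_scale_def mat_def vec_eq_iff)+

lemma tr_commute: "tr (x * y) = tr (y * x)"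
  by transfer (rule trace_mul_sym)

lemma tr_add: "tr (x + y) = tr x + tr y"
  and tr_diff: "tr (x - y) = tr x - tr y"
  and tr_cscale: "tr (cscale z x) = z * tr x"
  and tr_adj: "tr (adj x) = cnj (tr x)"
  by (transfer; simp add: trace_def cmat_scale_def adjoint_def sum.distrib sum_subtractf
        sum_distrib_left)+

lemma tr_rotate: "tr (x * (y * z)) = tr (y * (z * x))"
  by (metis tr_commute mult.assoc)

lemma cscale_eq_mult: "cscale z x = Abs_sqmat (mat z) * x"
  by transfer (simp add: Abs_sqmat_inverse cmat_scale_def matrix_matrix_mult_def mat_def vec_eq_iff
      if_distrib if_distribR cong: if_cong)

lemma cscale_mult_left: "cscale z x * y = cscale z (x * y)"
  and cscale_mult_right: "x * cscale z y = cscale z (x * y)"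
  and cscale_cscale: "cscale z (cscale w x) = cscale (z * w) x"
  and cscale_1 [simp]: "cscale 1 x = x"
  and cscale_add: "cscale z (x + y) = cscale z x + cscale z y"
  and cscale_diff: "cscale z (x - y) = cscale z x - cscale z y"
  and cscale_uminus: "cscale (- z) x = - cscale z x"
  by (transfer; simp add: cmat_scale_def matrix_matrix_mult_def vec_eq_iff sum_distrib_left
        algebra_simps)+

lemma bounded_linear_cscale: "bounded_linear (cscale z :: 'n::finite sqmat \<Rightarrow> _)"
  unfolding cscale_eq_mult[abs_def] by (rule bounded_linear_mult_right)

lemma norm_adj_le: "norm (adj x) \<le> norm x"
  by transfer (rule spec_norm_adjoint_le)

lemma bounded_linear_adj: "bounded_linear (adj :: 'n::finite sqmat \<Rightarrow> 'n sqmat)"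
  by (rule bounded_linear_intro[where K=1]) (simp_all add: adj_add adj_scaleR norm_adj_le)

lemma bounded_linear_tr: "bounded_linear (tr :: 'n::finite sqmat \<Rightarrow> complex)"
proof (rule bounded_linear_intro[where K="real CARD('n)"])
  show "norm (tr x) \<le> norm x * real CARD('n)" for x :: "'n sqmat"
  proof transfer
    fix A :: "complex^'n^'n"
    have "norm (trace A) \<le> (\<Sum>i\<in>UNIV. cmod (A $ i $ i))"
      unfolding trace_def by (rule norm_sum)
    also have "\<dots> \<le> (\<Sum>i\<in>(UNIV::'n set). spec_norm A)"
      by (intro sum_mono matrix_entry_le_spec_norm)
    finally show "norm (trace A) \<le> spec_norm A * real CARD('n)" by (simp add: mult.commute)
  qed
qed (transfer; simp add: trace_def scaleR_sum_right sum.distrib)+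

lemma bounded_linear_tr_mult_left: "bounded_linear (\<lambda>x::'n::finite sqmat. tr (c * x))"
  using bounded_linear_compose[OF bounded_linear_tr bounded_linear_mult_right[of c]] by simp

lemma continuous_on_cscale [continuous_intros]:
  "continuous_on S f \<Longrightarrow> continuous_on S (\<lambda>x. cscale z (f x))"
  using bounded_linear.continuous_on[OF bounded_linear_cscale] by blast

lemma continuous_on_tr_mult_left [continuous_intros]:
  "continuous_on S f \<Longrightarrow> continuous_on S (\<lambda>x. tr (c * f x))"
  using bounded_linear.continuous_on[OF bounded_linear_tr_mult_left] by blast

lemma tr_sum: "tr (sum f A) = (\<Sum>x\<in>A. tr (f x))"
  by (rule linear_sum[OF bounded_linear.linear[OF bounded_linear_tr]])

lemma adj_power: "adj (x ^ n) = adj x ^ n"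
  by (induction n) (simp_all add: adj_mult power_commutes)

lemma adj_exp: "adj (exp x) = exp (adj x)"
  unfolding exp_def
  by (simp add: bounded_linear.suminf[OF bounded_linear_adj summable_exp_generic] adj_scaleR
      adj_power)

lemma norm_unitary_le: "adj u * u = 1 \<Longrightarrow> norm u \<le> 1"
  by transfer (rule spec_norm_unitary_le)

lemma continuous_on_exp_ball:
  "continuous_on (ball 0 R) (exp :: 'a::{real_normed_algebra_1,banach} \<Rightarrow> 'a)"
proof -
  have limit: "uniform_limit (ball 0 R) (\<lambda>n (x::'a). \<Sum>i<n. x ^ i /\<^sub>R fact i) (\<lambda>x. \<Sum>i. x ^ i /\<^sub>R fact i)
      sequentially"
  proof (rule Weierstrass_m_test[where M="\<lambda>n. R ^ n /\<^sub>R fact n"])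
    show "norm ((x::'a) ^ n /\<^sub>R fact n) \<le> R ^ n /\<^sub>R fact n" if "x \<in> ball 0 R" for n x
    proof -
      have "norm (x ^ n) \<le> R ^ n"
        using that by (intro order.trans[OF norm_power_ineq] power_mono) auto
      then show ?thesis by (simp add: divide_right_mono divide_inverse_commute)
    qed
  qed (rule summable_exp_generic)
  have "continuous_on (ball 0 R) (\<lambda>x::'a. \<Sum>i. x ^ i /\<^sub>R fact i)"
    by (rule uniform_limit_theorem[OF _ limit]) (intro always_eventually allI continuous_intros, simp)
  then show ?thesis by (simp add: exp_def)
qed

lemma continuous_on_exp_banach [continuous_intros]:
  "continuous_on S f \<Longrightarrow> continuous_on S (\<lambda>x. exp (f x :: 'a::{real_normed_algebra_1,banach}))"
proof -
  have "isCont (exp :: 'a \<Rightarrow> 'a) x" for x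
  proof -
    have "x \<in> ball 0 (norm x + 1)" by simp
    then show ?thesis
      using continuous_on_exp_ball continuous_on_eq_continuous_at[OF open_ball] by blast
  qed
  then have "continuous_on UNIV (exp :: 'a \<Rightarrow> 'a)"
    by (rule continuous_at_imp_continuous_on[rule_format])
  then show "continuous_on S f \<Longrightarrow> continuous_on S (\<lambda>x. exp (f x))"
    using continuous_on_compose2 by blast
qed

lemma exp_neg_mult_exp [simp]: "exp (- x) * exp x = (1::'a::{real_normed_algebra_1,banach})"
  and exp_mult_exp_neg [simp]: "exp x * exp (- x) = (1::'a)"
  using exp_minus_inverse[of x] exp_minus_inverse[of "- x"] by simp_all

lemma exp_cancel_left [simp]: "exp x * (exp (- x) * y) = (y::'a::{real_normed_algebra_1,banach})"
  and exp_neg_cancel_left [simp]: "exp (- x) * (exp x * y) = (y::'a)"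
  by (simp_all flip: mult.assoc)

lemma exp_skew_unitary:
  assumes "adj b = - b"
  shows "adj (exp (s *\<^sub>R b)) = exp (- (s *\<^sub>R b))" and "norm (exp (s *\<^sub>R b)) \<le> 1"
proof -
  show adj: "adj (exp (s *\<^sub>R b)) = exp (- (s *\<^sub>R b))"
    by (simp add: adj_exp adj_scaleR assms)
  show "norm (exp (s *\<^sub>R b)) \<le> 1"
    by (rule norm_unitary_le) (simp add: adj)
qed

lemma mexp_eq_exp: "mexp (A::complex^'n::finite^'n) = Rep_sqmat (exp (Abs_sqmat A))"
proof -
  have pow: "Rep_sqmat (x ^ n) = mpow (Rep_sqmat x) n" for x :: "'n sqmat" and n
    by (induction n) (simp_all add: one_sqmat.rep_eq times_sqmat.rep_eq)
  have "cmat_scale (of_real (1 / fact k)) A = A /\<^sub>R fact k" for A :: "complex^'n^'n" and k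
    by (simp add: cmat_scale_def vec_eq_iff scaleR_conv_of_real[where 'a=complex] divide_inverse)
  then have "Rep_sqmat (exp (Abs_sqmat A)) = mexp A"
    unfolding exp_def mexp_def
    by (simp add: bounded_linear.suminf[OF bounded_linear_Rep_sqmat summable_exp_generic] pow
        scaleR_sqmat.rep_eq Abs_sqmat_inverse)
  then show ?thesis by simp
qed

definition generator :: "complex^'n^'n \<Rightarrow> 'n::finite sqmat" where
  "generator A = Abs_sqmat (cmat_scale (- \<i>) A)"

lemma mexp_eq_exp_generator:
  "mexp (cmat_scale (- \<i> * complex_of_real s) A) = Rep_sqmat (exp (s *\<^sub>R generator A))"
proof -
  have "Rep_sqmat (s *\<^sub>R generator A) = s *\<^sub>R cmat_scale (- \<i>) A"
    by (simp add: generator_def scaleR_sqmat.rep_eq Abs_sqmat_inverse)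
  then have "cmat_scale (- \<i> * complex_of_real s) A = Rep_sqmat (s *\<^sub>R generator A)"
    by (simp add: vec_eq_iff cmat_scale_def scaleR_conv_of_real[where 'a=complex])
  then show ?thesis by (simp add: mexp_eq_exp Rep_sqmat_inverse)
qed

lemma adj_generator:
  assumes "hermitian A"
  shows "adj (generator A) = - generator A"
proof -
  have "adjoint (cmat_scale (- \<i>) A) = - cmat_scale (- \<i>) A"
    using assms unfolding hermitian_def by (auto simp: adjoint_def cmat_scale_def vec_eq_iff)
  then show ?thesis by (simp add: generator_def adj.abs_eq uminus_sqmat.abs_eq)
qed

section \<open>Expectation values in a density matrix\<close>

text \<open>The bound \<open>|tr (C \<rho>)| \<le> \<parallel>C\<parallel>\<close> is obtained without diagonalising \<open>\<rho>\<close>: the Cauchy-Schwarz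
  inequality for the positive semidefinite form \<open>tr (X\<^sup>* \<rho> Y)\<close> gives \<open>|tr (\<rho> D)|\<^sup>2 \<le> tr (\<rho> D\<^sup>2)\<close>
  for Hermitian \<open>D\<close>, hence \<open>|tr (\<rho> D)|^(2^m) \<le> K \<parallel>D\<parallel>^(2^m)\<close> for all \<open>m\<close>, which forces
  \<open>|tr (\<rho> D)| \<le> \<parallel>D\<parallel>\<close>.\<close>

definition tr_form :: "'n::finite sqmat \<Rightarrow> 'n sqmat \<Rightarrow> 'n sqmat \<Rightarrow> complex" where
  "tr_form \<rho> x y = tr (adj x * \<rho> * y)"

lemma trace_adjoint_mult_mult_eq_sum_columns:
  "trace (adjoint X ** (R::complex^'n^'n) ** X) = (\<Sum>j\<in>UNIV. cinner (column j X) (R *v column j X))"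
  unfolding trace_def cinner_def matrix_matrix_mult_def matrix_vector_mult_def column_def
    adjoint_def
  by (simp add: sum_distrib_left sum_distrib_right mult_ac) (rule sum.cong[OF refl], rule sum.swap)

lemma hermitian_cinner_real:
  assumes "hermitian R"
  shows "Im (cinner x ((R::complex^'n^'n) *v x)) = 0"
proof -
  have "cinner x (R *v x) = cinner (R *v x) x"
    using cinner_mult_vec_left[of R x x] assms by (simp add: hermitian_def)
  also have "\<dots> = cnj (cinner x (R *v x))" by (simp add: cinner_def mult.commute)
  finally show ?thesis by (metis Reals_cnj_iff complex_is_Real_iff)
qed

lemma tr_form_density_nonneg:
  assumes "density_matrix R"
  shows "tr_form (Abs_sqmat R) x x = of_real (Re (tr_form (Abs_sqmat R) x x))"
    and "Re (tr_form (Abs_sqmat R) x x) \<ge> 0"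
proof -
  have eq: "tr_form (Abs_sqmat R) x x
      = (\<Sum>j\<in>UNIV. cinner (column j (Rep_sqmat x)) (R *v column j (Rep_sqmat x)))"
    unfolding tr_form_def
    by (simp add: tr.rep_eq adj.rep_eq times_sqmat.rep_eq Abs_sqmat_inverse
        trace_adjoint_mult_mult_eq_sum_columns)
  have "hermitian R" and pos: "\<forall>x. Re (cinner x (R *v x)) \<ge> 0"
    using assms by (auto simp: density_matrix_def)
  then have "Im (tr_form (Abs_sqmat R) x x) = 0"
    unfolding eq by (simp add: Im_sum hermitian_cinner_real)
  then show "tr_form (Abs_sqmat R) x x = of_real (Re (tr_form (Abs_sqmat R) x x))"
    by (simp add: complex_eq_iff)
  show "Re (tr_form (Abs_sqmat R) x x) \<ge> 0"
    unfolding eq by (simp add: sum_nonneg pos)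
qed

lemma tr_form_swap:
  assumes "adj \<rho> = \<rho>"
  shows "tr_form \<rho> y x = cnj (tr_form \<rho> x y)"
proof -
  have "adj (adj x * \<rho> * y) = adj y * \<rho> * x" using assms by (simp add: adj_mult mult.assoc)
  then show ?thesis unfolding tr_form_def by (metis tr_adj)
qed

lemma tr_form_diff_cscale:
  "tr_form \<rho> (x - cscale z y) (x - cscale z y)
    = tr_form \<rho> x x - z * tr_form \<rho> x y - cnj z * tr_form \<rho> y x + cnj z * z * tr_form \<rho> y y"
  unfolding tr_form_def
  by (simp add: adj_diff adj_cscale algebra_simps cscale_mult_left cscale_mult_right cscale_cscale
      tr_diff tr_add tr_cscale)

lemma quadratic_nonneg_imp_le:
  fixes a q c :: real
  assumes nonneg: "\<And>s. 0 \<le> a - 2 * s * q + s\<^sup>2 * q * c" and "q \<ge> 0" "c \<ge> 0"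
  shows "q \<le> a * c"
proof (cases "c = 0")
  case True
  show ?thesis
  proof (rule ccontr)
    assume "\<not> q \<le> a * c"
    then have "q > 0" using True by simp
    have "0 \<le> a - 2 * ((a + 1) / (2 * q)) * q" using nonneg[of "(a + 1) / (2 * q)"] True by simp
    also have "\<dots> = -1" using \<open>q > 0\<close> by (simp add: field_simps)
    finally show False by simp
  qed
next
  case False
  then have "c > 0" using assms by simp
  have "0 \<le> a - 2 * (1 / c) * q + (1 / c)\<^sup>2 * q * c" by (rule nonneg)
  also have "\<dots> = (a * c - q) / c" using \<open>c > 0\<close> by (simp add: field_simps power2_eq_square)
  finally show ?thesis using \<open>c > 0\<close> by (simp add: zero_le_divide_iff)
qed

lemma tr_form_Cauchy_Schwarz:
  assumes "density_matrix R"
  defines "\<rho> \<equiv> Abs_sqmat R"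
  shows "(cmod (tr_form \<rho> x y))\<^sup>2 \<le> Re (tr_form \<rho> x x) * Re (tr_form \<rho> y y)"
proof (rule quadratic_nonneg_imp_le)
  let ?b = "tr_form \<rho> x y"
  have herm: "adj \<rho> = \<rho>"
    using assms by (simp add: density_matrix_def hermitian_def adj_def Abs_sqmat_inverse)
  fix s :: real
  let ?z = "complex_of_real s * cnj ?b"
  have norm_b: "?b * cnj ?b = of_real ((cmod ?b)\<^sup>2)"
    by (rule complex_norm_square[symmetric])
  have "?z * ?b = of_real s * (?b * cnj ?b)" "cnj ?z * cnj ?b = of_real s * (?b * cnj ?b)"
    "cnj ?z * ?z = of_real (s\<^sup>2) * (?b * cnj ?b)"
    by (simp_all add: mult_ac power2_eq_square)
  then have "?z * ?b = of_real (s * (cmod ?b)\<^sup>2)" "cnj ?z * cnj ?b = of_real (s * (cmod ?b)\<^sup>2)"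
    "cnj ?z * ?z = of_real (s\<^sup>2 * (cmod ?b)\<^sup>2)"
    by (simp_all only: norm_b of_real_mult)
  moreover have "tr_form \<rho> y y = of_real (Re (tr_form \<rho> y y))"
    unfolding \<rho>_def by (rule tr_form_density_nonneg(1)[OF assms(1)])
  ultimately have "Re (tr_form \<rho> (x - cscale ?z y) (x - cscale ?z y))
      = Re (tr_form \<rho> x x) - 2 * s * (cmod ?b)\<^sup>2 + s\<^sup>2 * (cmod ?b)\<^sup>2 * Re (tr_form \<rho> y y)"
    unfolding tr_form_diff_cscale tr_form_swap[OF herm, of y x]
    by (simp only:) (simp add: power2_eq_square)
  then show "0 \<le> Re (tr_form \<rho> x x) - 2 * s * (cmod ?b)\<^sup>2 + s\<^sup>2 * (cmod ?b)\<^sup>2 * Re (tr_form \<rho> y y)"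
    using tr_form_density_nonneg(2)[OF assms(1)] unfolding \<rho>_def by metis
qed (use tr_form_density_nonneg(2)[OF assms(1)] in \<open>auto simp: \<rho>_def\<close>)

lemma density_matrix_Abs_sqmat:
  assumes "density_matrix R"
  shows "adj (Abs_sqmat R) = Abs_sqmat R" and "tr (Abs_sqmat R) = 1"
  using assms by (simp_all add: density_matrix_def hermitian_def adj_def tr_def Abs_sqmat_inverse)

lemma expectation_square_le:
  assumes "density_matrix R"
  shows "(cmod (tr (Abs_sqmat R * c)))\<^sup>2 \<le> Re (tr (Abs_sqmat R * (c * adj c)))"
proof -
  let ?\<rho> = "Abs_sqmat R"
  have "tr_form ?\<rho> 1 c = tr (?\<rho> * c)" and "tr_form ?\<rho> 1 1 = 1"
    by (simp_all add: tr_form_def density_matrix_Abs_sqmat[OF assms])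
  moreover have "tr_form ?\<rho> c c = tr (?\<rho> * (c * adj c))"
    unfolding tr_form_def by (metis tr_rotate mult.assoc)
  ultimately show ?thesis
    using tr_form_Cauchy_Schwarz[OF assms, of 1 c] by simp
qed

lemma expectation_power_power2_le:
  assumes "density_matrix R" and "adj d = d"
  shows "(cmod (tr (Abs_sqmat R * d))) ^ (2 ^ m) \<le> cmod (tr (Abs_sqmat R * d ^ (2 ^ m)))"
proof (induction m)
  case (Suc m)
  let ?\<rho> = "Abs_sqmat R"
  have "(cmod (tr (?\<rho> * d))) ^ (2 ^ Suc m) = ((cmod (tr (?\<rho> * d))) ^ (2 ^ m))\<^sup>2"
    by (simp add: power_mult[symmetric] mult.commute)
  also have "\<dots> \<le> (cmod (tr (?\<rho> * d ^ (2 ^ m))))\<^sup>2"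
    by (intro power_mono Suc.IH) simp
  also have "\<dots> \<le> Re (tr (?\<rho> * (d ^ (2 ^ m) * adj (d ^ (2 ^ m)))))"
    by (rule expectation_square_le[OF assms(1)])
  also have "d ^ (2 ^ m) * adj (d ^ (2 ^ m)) = d ^ (2 ^ Suc m)"
    using assms(2) by (simp add: adj_exp power_add[symmetric] mult_2 adj_power)
  finally show ?case by (rule order.trans) (rule complex_Re_le_cmod)
qed simp

lemma le_if_power2_powers_bounded:
  fixes x y K :: real
  assumes "x \<ge> 0" "y \<ge> 0" and bounded: "\<And>m. x ^ (2 ^ m) \<le> K * y ^ (2 ^ m)"
  shows "x \<le> y"
proof (rule ccontr)
  assume "\<not> x \<le> y"
  then have "y < x" by simp
  show False
  proof (cases "y = 0")
    case True
    then show False using bounded[of 0] \<open>y < x\<close> by simp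
  next
    case False
    then have "y > 0" using assms by simp
    define q where "q = x / y"
    have "q > 1" using \<open>y < x\<close> \<open>y > 0\<close> by (simp add: q_def)
    obtain m :: nat where m: "real m > K / (q - 1)" using reals_Archimedean2 by blast
    have "real m * (q - 1) \<le> real (2 ^ m) * (q - 1)"
      using \<open>q > 1\<close> less_exp[of m] by (intro mult_right_mono) (simp_all del: of_nat_power)
    also have "1 + \<dots> \<le> q ^ (2 ^ m)"
      using Bernoulli_inequality[of "q - 1" "2 ^ m"] \<open>q > 1\<close> by simp
    also have "\<dots> = x ^ (2 ^ m) / y ^ (2 ^ m)" by (simp add: q_def power_divide)
    also have "\<dots> \<le> K" using bounded[of m] \<open>y > 0\<close> by (simp add: divide_le_eq)
    finally have "real m * (q - 1) < K" by simp
    with m \<open>q > 1\<close> show False by (simp add: divide_less_eq)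
  qed
qed

lemma trace_mult_le_sum_entries:
  "cmod (trace ((R::complex^'n^'n) ** X)) \<le> (\<Sum>i\<in>UNIV. \<Sum>j\<in>UNIV. cmod (R $ i $ j)) * spec_norm X"
proof -
  have "cmod (trace (R ** X)) \<le> (\<Sum>i\<in>UNIV. cmod (\<Sum>j\<in>UNIV. R $ i $ j * X $ j $ i))"
    unfolding trace_def matrix_matrix_mult_def by (simp add: norm_sum)
  also have "\<dots> \<le> (\<Sum>i\<in>UNIV. \<Sum>j\<in>UNIV. cmod (R $ i $ j) * spec_norm X)"
    by (intro sum_mono order.trans[OF norm_sum])
      (simp add: norm_mult mult_left_mono matrix_entry_le_spec_norm)
  finally show ?thesis by (simp add: sum_distrib_right)
qed

lemma expectation_hermitian_le_norm:
  assumes "density_matrix R" and "adj d = d"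
  shows "cmod (tr (Abs_sqmat R * d)) \<le> norm d"
proof (rule le_if_power2_powers_bounded)
  let ?K = "\<Sum>i\<in>UNIV. \<Sum>j\<in>UNIV. cmod (R $ i $ j)"
  fix m
  have "(cmod (tr (Abs_sqmat R * d))) ^ (2 ^ m) \<le> cmod (tr (Abs_sqmat R * d ^ (2 ^ m)))"
    by (rule expectation_power_power2_le[OF assms])
  also have "\<dots> \<le> ?K * norm (d ^ (2 ^ m))"
    using trace_mult_le_sum_entries[of R "Rep_sqmat (d ^ (2 ^ m))"]
    by (simp add: tr.rep_eq times_sqmat.rep_eq norm_sqmat.rep_eq Abs_sqmat_inverse)
  also have "\<dots> \<le> ?K * norm d ^ (2 ^ m)"
    by (intro mult_left_mono norm_power_ineq sum_nonneg) auto
  finally show "(cmod (tr (Abs_sqmat R * d))) ^ (2 ^ m) \<le> ?K * norm d ^ (2 ^ m)" .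
qed auto

lemma expectation_le_norm:
  assumes "density_matrix R"
  shows "cmod (tr (c * Abs_sqmat R)) \<le> norm c"
proof -
  let ?\<rho> = "Abs_sqmat R"
  have "(cmod (tr (?\<rho> * c)))\<^sup>2 \<le> Re (tr (?\<rho> * (c * adj c)))"
    by (rule expectation_square_le[OF assms])
  also have "\<dots> \<le> cmod (tr (?\<rho> * (c * adj c)))" by (rule complex_Re_le_cmod)
  also have "\<dots> \<le> norm (c * adj c)"
    by (rule expectation_hermitian_le_norm[OF assms]) (simp add: adj_mult)
  also have "\<dots> \<le> norm c * norm (adj c)" by (rule norm_mult_ineq)
  also have "\<dots> \<le> (norm c)\<^sup>2"
    by (simp add: power2_eq_square mult_left_mono norm_adj_le)
  finally have "(cmod (tr (c * ?\<rho>)))\<^sup>2 \<le> (norm c)\<^sup>2"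
    by (simp only: tr_commute[of c])
  then show ?thesis by (rule power2_le_imp_le) simp
qed

lemma expectation_unitary_conj_le_norm:
  assumes "density_matrix R" and "adj u * u = 1" and "u * adj u = 1"
  shows "cmod (tr (c * (u * Abs_sqmat R * adj u))) \<le> norm c"
proof -
  have "tr (c * (u * Abs_sqmat R * adj u)) = tr ((adj u * c * u) * Abs_sqmat R)"
    using tr_commute[of "c * u * Abs_sqmat R" "adj u"] by (simp add: mult.assoc)
  then have "cmod (tr (c * (u * Abs_sqmat R * adj u))) \<le> norm (adj u * c * u)"
    using expectation_le_norm[OF assms(1)] by simp
  also have "\<dots> \<le> norm (adj u) * norm c * norm u"
    by (intro order.trans[OF norm_mult_ineq] mult_right_mono norm_mult_ineq norm_ge_zero)
  also have "\<dots> \<le> 1 * norm c * 1"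
    using assms(2,3) norm_unitary_le[of u] norm_unitary_le[of "adj u"]
    by (intro mult_mono) auto
  finally show ?thesis by simp
qed

section \<open>The Dyson expansion for a fixed noise value\<close>

text \<open>For \<open>b\<^sub>0 = -iH\<^sub>0\<close> and \<open>b = -i(H\<^sub>0 + \<delta>V)\<close>, \<open>interaction_op b\<^sub>0 A s\<close> is the interaction picture
  operator \<open>A\<^sub>I(s)\<close> and \<open>interaction_state b\<^sub>0 b \<rho> s\<close> the interaction picture state.\<close>

definition interaction_op :: "'n::finite sqmat \<Rightarrow> 'n sqmat \<Rightarrow> real \<Rightarrow> 'n sqmat" where
  "interaction_op b0 a s = exp (- (s *\<^sub>R b0)) * a * exp (s *\<^sub>R b0)"

definition interaction_state :: "'n::finite sqmat \<Rightarrow> 'n sqmat \<Rightarrow> 'n sqmat \<Rightarrow> real \<Rightarrow> 'n sqmat" where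
  "interaction_state b0 b \<rho> s =
     (exp (- (s *\<^sub>R b0)) * exp (s *\<^sub>R b)) * \<rho> * (exp (- (s *\<^sub>R b)) * exp (s *\<^sub>R b0))"

lemma continuous_on_interaction_op: "continuous_on S (interaction_op b0 a)"
  unfolding interaction_op_def by (intro continuous_intros)

lemma continuous_on_interaction_state: "continuous_on S (interaction_state b0 b \<rho>)"
  unfolding interaction_state_def by (intro continuous_intros)

lemma interaction_op_cscale: "interaction_op b0 (cscale c a) s = cscale c (interaction_op b0 a s)"
  by (simp add: interaction_op_def cscale_mult_left cscale_mult_right)

lemma norm_interaction_op_le:
  assumes "adj b0 = - b0"
  shows "norm (interaction_op b0 a s) \<le> norm a"
proof -
  have "norm (interaction_op b0 a s) \<le> norm (exp (- (s *\<^sub>R b0))) * norm a * norm (exp (s *\<^sub>R b0))"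
    unfolding interaction_op_def
    by (intro order.trans[OF norm_mult_ineq] mult_right_mono norm_mult_ineq norm_ge_zero)
  also have "\<dots> \<le> 1 * norm a * 1"
    using exp_skew_unitary(2)[OF assms, of s] exp_skew_unitary(2)[OF assms, of "- s"]
    by (intro mult_mono) auto
  finally show ?thesis by simp
qed

lemma has_vector_derivative_exp_neg_mult_exp:
  "((\<lambda>s. exp (- (s *\<^sub>R a)) * exp (s *\<^sub>R b)) has_vector_derivative
     interaction_op a (b - a) s * (exp (- (s *\<^sub>R a)) * exp (s *\<^sub>R b))) (at s within T)"
proof -
  have "((\<lambda>s. exp (s *\<^sub>R (- a)) * exp (s *\<^sub>R b)) has_vector_derivative
      exp (s *\<^sub>R (- a)) * (exp (s *\<^sub>R b) * b) + exp (s *\<^sub>R (- a)) * - a * exp (s *\<^sub>R b))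
      (at s within T)"
    by (rule has_vector_derivative_mult exp_scaleR_has_vector_derivative_right)+
  moreover have "exp (s *\<^sub>R (- a)) * (exp (s *\<^sub>R b) * b) + exp (s *\<^sub>R (- a)) * - a * exp (s *\<^sub>R b)
      = interaction_op a (b - a) s * (exp (- (s *\<^sub>R a)) * exp (s *\<^sub>R b))"
    by (simp add: interaction_op_def mult.assoc exp_times_scaleR_commute algebra_simps)
  ultimately show ?thesis by simp
qed

lemma has_vector_derivative_exp_neg_mult_exp':
  "((\<lambda>s. exp (- (s *\<^sub>R b)) * exp (s *\<^sub>R a)) has_vector_derivative
     (exp (- (s *\<^sub>R b)) * exp (s *\<^sub>R a)) * interaction_op a (a - b) s) (at s within T)"
proof -
  have "((\<lambda>s. exp (s *\<^sub>R (- b)) * exp (s *\<^sub>R a)) has_vector_derivative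
      exp (s *\<^sub>R (- b)) * (exp (s *\<^sub>R a) * a) + exp (s *\<^sub>R (- b)) * - b * exp (s *\<^sub>R a))
      (at s within T)"
    by (rule has_vector_derivative_mult exp_scaleR_has_vector_derivative_right)+
  moreover have "exp (s *\<^sub>R (- b)) * (exp (s *\<^sub>R a) * a) + exp (s *\<^sub>R (- b)) * - b * exp (s *\<^sub>R a)
      = (exp (- (s *\<^sub>R b)) * exp (s *\<^sub>R a)) * interaction_op a (a - b) s"
    by (simp add: interaction_op_def mult.assoc exp_times_scaleR_commute algebra_simps)
  ultimately show ?thesis by simp
qed

lemma interaction_state_has_vector_derivative:
  "(interaction_state b0 b \<rho> has_vector_derivative
      interaction_op b0 (b - b0) s * interaction_state b0 b \<rho> s
      - interaction_state b0 b \<rho> s * interaction_op b0 (b - b0) s) (at s within T)"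
proof -
  let ?X = "\<lambda>s. exp (- (s *\<^sub>R b0)) * exp (s *\<^sub>R b)"
  let ?Y = "\<lambda>s. exp (- (s *\<^sub>R b)) * exp (s *\<^sub>R b0)"
  let ?g = "interaction_op b0 (b - b0) s"
  have "interaction_op b0 (b0 - b) s = - ?g"
    unfolding interaction_op_def by (simp add: algebra_simps)
  moreover have "((\<lambda>s. ?X s * \<rho> * ?Y s) has_vector_derivative
      ?X s * \<rho> * (?Y s * interaction_op b0 (b0 - b) s) + (?X s * 0 + ?g * ?X s * \<rho>) * ?Y s)
      (at s within T)"
    by (intro has_vector_derivative_mult has_vector_derivative_const
        has_vector_derivative_exp_neg_mult_exp has_vector_derivative_exp_neg_mult_exp')
  ultimately show ?thesis
    unfolding interaction_state_def[abs_def] by (simp add: algebra_simps)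
qed

fun comm_integral ::
  "(real \<Rightarrow> 'n::finite sqmat) \<Rightarrow> nat \<Rightarrow> (real \<Rightarrow> 'n sqmat) \<Rightarrow> real \<Rightarrow> 'n sqmat" where
  "comm_integral W 0 X s = X s"
| "comm_integral W (Suc k) X s =
     integral {0..s} (\<lambda>\<tau>. W \<tau> * comm_integral W k X \<tau> - comm_integral W k X \<tau> * W \<tau>)"

lemma integrable_on_subinterval:
  fixes f :: "real \<Rightarrow> 'a::banach"
  assumes "continuous_on {0..t} f" and "s \<in> {0..t}"
  shows "f integrable_on {0..s}"
  using assms by (intro integrable_continuous_real continuous_on_subset[OF assms(1)]) auto

lemma norm_commutator_le:
  "norm (a * b - b * (a::'a::real_normed_algebra)) \<le> 2 * norm a * norm b"
proof -
  have "norm (b * a) \<le> norm a * norm b" using norm_mult_ineq[of b a] by (simp add: mult.commute)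
  then show ?thesis using norm_triangle_ineq4[of "a * b" "b * a"] norm_mult_ineq[of a b] by linarith
qed

context
  fixes W :: "real \<Rightarrow> 'n::finite sqmat"
  assumes continuous_W: "continuous_on UNIV W"
begin

lemma continuous_on_commutator_W:
  "continuous_on S X \<Longrightarrow> continuous_on S (\<lambda>\<tau>. W \<tau> * X \<tau> - X \<tau> * W \<tau>)"
  using continuous_on_subset[OF continuous_W] by (intro continuous_intros) auto

lemma continuous_on_comm_integral:
  assumes "continuous_on {0..t} X"
  shows "continuous_on {0..t} (comm_integral W k X)"
proof (induction k)
  case (Suc k)
  then have "(\<lambda>\<tau>. W \<tau> * comm_integral W k X \<tau> - comm_integral W k X \<tau> * W \<tau>) integrable_on {0..t}"
    by (intro integrable_continuous_real continuous_on_commutator_W)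
  then show ?case by (simp add: indefinite_integral_continuous_1)
qed (use assms in simp)

lemma comm_integral_cong:
  assumes "\<forall>\<tau>\<in>{0..t}. X \<tau> = Y \<tau>" and "s \<in> {0..t}"
  shows "comm_integral W k X s = comm_integral W k Y s"
  using assms(2)
proof (induction k arbitrary: s)
  case (Suc k)
  then show ?case by simp (rule integral_cong, auto)
qed (use assms(1) in simp)

lemma comm_integral_add:
  assumes X: "continuous_on {0..t} X" and Y: "continuous_on {0..t} Y" and "s \<in> {0..t}"
  shows "comm_integral W k (\<lambda>s. X s + Y s) s = comm_integral W k X s + comm_integral W k Y s"
  using assms(3)
proof (induction k arbitrary: s)
  case (Suc k)
  let ?f = "\<lambda>Z \<tau>. W \<tau> * comm_integral W k Z \<tau> - comm_integral W k Z \<tau> * W \<tau>"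
  have "comm_integral W (Suc k) (\<lambda>s. X s + Y s) s = integral {0..s} (\<lambda>\<tau>. ?f X \<tau> + ?f Y \<tau>)"
    by simp (rule integral_cong, use Suc in \<open>auto simp: algebra_simps\<close>)
  also have "\<dots> = integral {0..s} (?f X) + integral {0..s} (?f Y)"
    using X Y Suc.prems
    by (intro integral_add integrable_on_subinterval continuous_on_commutator_W
        continuous_on_comm_integral)
  finally show ?case by simp
qed simp

lemma comm_integral_cscale:
  assumes X: "continuous_on {0..t} X" and "s \<in> {0..t}"
  shows "comm_integral W k (\<lambda>s. cscale z (X s)) s = cscale z (comm_integral W k X s)"
  using assms(2)
proof (induction k arbitrary: s)
  case (Suc k)
  let ?f = "\<lambda>\<tau>. W \<tau> * comm_integral W k X \<tau> - comm_integral W k X \<tau> * W \<tau>"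
  have "comm_integral W (Suc k) (\<lambda>s. cscale z (X s)) s = integral {0..s} (cscale z \<circ> ?f)"
    by simp (rule integral_cong,
        use Suc in \<open>auto simp: cscale_mult_left cscale_mult_right cscale_diff\<close>)
  also have "\<dots> = cscale z (integral {0..s} ?f)"
    using X Suc.prems
    by (intro integral_linear bounded_linear_cscale integrable_on_subinterval
        continuous_on_commutator_W continuous_on_comm_integral)
  finally show ?case by simp
qed simp

lemma comm_integral_comm_integral_1:
  "comm_integral W k (comm_integral W 1 X) s = comm_integral W (Suc k) X s"
  by (induction k arbitrary: s) simp_all

text \<open>Iterating the integral equation \<open>P = \<rho> + c \<integral> [W, P]\<close> of the interaction picture state gives
  its Dyson series in powers of \<open>c\<close>, with an explicit remainder.\<close>

lemma comm_integral_expansion: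
  assumes P: "continuous_on {0..t} P"
    and integral_eq: "\<And>s. s \<in> {0..t} \<Longrightarrow> P s = \<rho> + cscale c (comm_integral W 1 P s)"
    and "s \<in> {0..t}"
  shows "P s = (\<Sum>k\<le>m. cscale (c ^ k) (comm_integral W k (\<lambda>_. \<rho>) s))
               + cscale (c ^ Suc m) (comm_integral W (Suc m) P s)"
  using assms(3)
proof (induction m arbitrary: s)
  case 0
  then show ?case using integral_eq by simp
next
  case (Suc m)
  have "comm_integral W (Suc m) P s
      = comm_integral W (Suc m) (\<lambda>s. \<rho> + cscale c (comm_integral W 1 P s)) s"
    by (rule comm_integral_cong[OF _ Suc.prems]) (use integral_eq in auto)
  also have "\<dots> = comm_integral W (Suc m) (\<lambda>_. \<rho>) s
      + comm_integral W (Suc m) (\<lambda>s. cscale c (comm_integral W 1 P s)) s"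
    using continuous_on_comm_integral[OF P, of 1]
    by (intro comm_integral_add[OF _ _ Suc.prems] continuous_intros)
  also have "comm_integral W (Suc m) (\<lambda>s. cscale c (comm_integral W 1 P s)) s
      = cscale c (comm_integral W (Suc m) (comm_integral W 1 P) s)"
    by (rule comm_integral_cscale[OF continuous_on_comm_integral[OF P] Suc.prems])
  also have "comm_integral W (Suc m) (comm_integral W 1 P) s = comm_integral W (Suc (Suc m)) P s"
    by (rule comm_integral_comm_integral_1)
  finally show ?case
    using Suc.IH[OF Suc.prems] by (simp add: cscale_add cscale_cscale mult.commute)
qed

lemma tr_mult_commutator: "tr (c * (a * n - n * a)) = tr ((c * a - a * c) * n)"
proof -
  have "tr (c * (n * a)) = tr (a * c * n)" by (metis tr_commute mult.assoc)
  then show ?thesis by (simp add: algebra_simps tr_diff)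
qed

lemma simplex_int_eq_comm_integral:
  assumes NC_Nil: "NC [] = \<rho>" and NC_Cons: "\<And>\<tau> ts. NC (\<tau> # ts) = W \<tau> * NC ts - NC ts * W \<tau>"
    and "s \<in> {0..t}"
  shows "simplex_int k s (\<lambda>ts. tr (c * NC ts)) = tr (c * comm_integral W k (\<lambda>_. \<rho>) s)"
  using assms(3)
proof (induction k arbitrary: s c)
  case (Suc k)
  let ?g = "\<lambda>\<tau>. W \<tau> * comm_integral W k (\<lambda>_. \<rho>) \<tau> - comm_integral W k (\<lambda>_. \<rho>) \<tau> * W \<tau>"
  have "simplex_int (Suc k) s (\<lambda>ts. tr (c * NC ts))
      = integral {0..s} (\<lambda>\<tau>. simplex_int k \<tau> (\<lambda>ts. tr (c * NC (\<tau> # ts))))"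
    by simp
  also have "\<dots> = integral {0..s} ((\<lambda>x. tr (c * x)) \<circ> ?g)"
  proof (rule integral_cong)
    fix \<tau> assume "\<tau> \<in> {0..s}"
    then have "\<tau> \<in> {0..t}" using Suc.prems by auto
    have "simplex_int k \<tau> (\<lambda>ts. tr (c * NC (\<tau> # ts)))
        = simplex_int k \<tau> (\<lambda>ts. tr ((c * W \<tau> - W \<tau> * c) * NC ts))"
      by (simp add: NC_Cons tr_mult_commutator)
    also have "\<dots> = tr (c * ?g \<tau>)"
      by (simp add: Suc.IH[OF \<open>\<tau> \<in> {0..t}\<close>] tr_mult_commutator)
    finally show "simplex_int k \<tau> (\<lambda>ts. tr (c * NC (\<tau> # ts))) = ((\<lambda>x. tr (c * x)) \<circ> ?g) \<tau>"
      by simp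
  qed
  also have "\<dots> = tr (c * integral {0..s} ?g)"
    using Suc.prems
    by (intro integral_linear bounded_linear_tr_mult_left integrable_on_subinterval
        continuous_on_commutator_W continuous_on_comm_integral continuous_on_const)
  finally show ?case by simp
qed (simp add: NC_Nil)

lemma integral_monomial:
  assumes "s \<ge> 0"
  shows "integral {0..s} (\<lambda>\<tau>::real. K * \<tau> ^ k) = K * s ^ Suc k / real (Suc k)"
proof -
  have "((\<lambda>\<tau>. K * \<tau> ^ k) has_integral (K * s ^ Suc k / real (Suc k) - K * 0 ^ Suc k / real (Suc k)))
      {0..s}"
  proof (rule fundamental_theorem_of_calculus[OF assms])
    show "((\<lambda>\<tau>. K * \<tau> ^ Suc k / real (Suc k)) has_vector_derivative K * x ^ k) (at x within {0..s})"
      for x :: real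
      unfolding has_real_derivative_iff_has_vector_derivative[symmetric]
      by (rule derivative_eq_intros refl | simp)+
  qed
  then have "((\<lambda>\<tau>. K * \<tau> ^ k) has_integral (K * s ^ Suc k / real (Suc k))) {0..s}" by simp
  then show ?thesis by (rule integral_unique)
qed

lemma tr_mult_comm_integral_Suc:
  assumes X: "continuous_on {0..t} X" and "s \<in> {0..t}"
  shows "tr (c * comm_integral W (Suc k) X s)
           = integral {0..s} (\<lambda>\<tau>. tr ((c * W \<tau> - W \<tau> * c) * comm_integral W k X \<tau>))"
    and "(\<lambda>\<tau>. tr ((c * W \<tau> - W \<tau> * c) * comm_integral W k X \<tau>)) integrable_on {0..s}"
proof -
  have "tr (c * comm_integral W (Suc k) X s)
      = integral {0..s} ((\<lambda>x. tr (c * x)) \<circ>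
          (\<lambda>\<tau>. W \<tau> * comm_integral W k X \<tau> - comm_integral W k X \<tau> * W \<tau>))"
    using assms
    by (simp, intro integral_linear[symmetric] bounded_linear_tr_mult_left
        integrable_on_subinterval continuous_on_commutator_W continuous_on_comm_integral)
  then show "tr (c * comm_integral W (Suc k) X s)
      = integral {0..s} (\<lambda>\<tau>. tr ((c * W \<tau> - W \<tau> * c) * comm_integral W k X \<tau>))"
    by (simp add: tr_mult_commutator o_def)
  have "continuous_on {0..t} (\<lambda>\<tau>. (c * W \<tau> - W \<tau> * c) * comm_integral W k X \<tau>)"
    using continuous_on_subset[OF continuous_W] continuous_on_comm_integral[OF X]
    by (intro continuous_intros) auto
  then show "(\<lambda>\<tau>. tr ((c * W \<tau> - W \<tau> * c) * comm_integral W k X \<tau>)) integrable_on {0..s}"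
    using assms(2) bounded_linear.continuous_on[OF bounded_linear_tr]
    by (intro integrable_on_subinterval) auto
qed

text \<open>If \<open>|tr (C X(\<tau>))| \<le> \<parallel>C\<parallel> M\<close> for every observable \<open>C\<close>, each commutator with \<open>W\<close> costs
  at most a factor \<open>2 \<parallel>W\<parallel>\<close>, and the simplex has volume \<open>s\<^sup>k / k!\<close>.\<close>

lemma tr_mult_comm_integral_le:
  assumes W_le: "\<And>\<tau>. norm (W \<tau>) \<le> w" and X: "continuous_on {0..t} X" and "M \<ge> 0"
    and X_le: "\<And>\<tau> c. \<tau> \<in> {0..t} \<Longrightarrow> cmod (tr (c * X \<tau>)) \<le> norm c * M"
    and "s \<in> {0..t}"
  shows "cmod (tr (c * comm_integral W k X s)) \<le> norm c * (M * (2 * w) ^ k / fact k) * s ^ k"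
  using assms(5)
proof (induction k arbitrary: s c)
  case 0
  then show ?case using X_le by simp
next
  case (Suc k)
  have "w \<ge> 0" using W_le[of 0] norm_ge_zero order.trans by blast
  define K where "K = M * (2 * w) ^ k / fact k"
  have "K \<ge> 0" unfolding K_def using \<open>M \<ge> 0\<close> \<open>w \<ge> 0\<close> by simp
  have "cmod (tr (c * comm_integral W (Suc k) X s))
      \<le> integral {0..s} (\<lambda>\<tau>. (2 * w * norm c * K) * \<tau> ^ k)"
    unfolding tr_mult_comm_integral_Suc(1)[OF X Suc.prems]
  proof (rule integral_norm_bound_integral[OF tr_mult_comm_integral_Suc(2)[OF X Suc.prems]])
    show "(\<lambda>\<tau>. 2 * w * norm c * K * \<tau> ^ k) integrable_on {0..s}"
      by (intro integrable_continuous_real continuous_intros)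
    fix \<tau> assume "\<tau> \<in> {0..s}"
    then have "\<tau> \<in> {0..t}" using Suc.prems by auto
    have "cmod (tr ((c * W \<tau> - W \<tau> * c) * comm_integral W k X \<tau>))
        \<le> norm (c * W \<tau> - W \<tau> * c) * K * \<tau> ^ k"
      using Suc.IH[OF \<open>\<tau> \<in> {0..t}\<close>, of "c * W \<tau> - W \<tau> * c"] by (simp add: K_def)
    also have "\<dots> \<le> (2 * w * norm c) * K * \<tau> ^ k"
    proof -
      have "norm (c * W \<tau> - W \<tau> * c) \<le> 2 * w * norm c"
        using norm_commutator_le[of c "W \<tau>"] mult_left_mono[OF W_le[of \<tau>], of "2 * norm c"]
        by (simp add: mult_ac)
      then show ?thesis using \<open>K \<ge> 0\<close> \<open>\<tau> \<in> {0..s}\<close> by (intro mult_right_mono) auto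
    qed
    finally show "norm (tr ((c * W \<tau> - W \<tau> * c) * comm_integral W k X \<tau>))
        \<le> 2 * w * norm c * K * \<tau> ^ k" by simp
  qed
  also have "\<dots> = 2 * w * norm c * K * s ^ Suc k / real (Suc k)"
    using Suc.prems by (intro integral_monomial) simp
  also have "\<dots> = norm c * (M * (2 * w) ^ Suc k / fact (Suc k)) * s ^ Suc k"
    by (simp add: K_def field_simps)
  finally show ?case .
qed

end

lemma interaction_state_0 [simp]: "interaction_state b0 b \<rho> 0 = \<rho>"
  by (simp add: interaction_state_def)

lemma interaction_state_integral_equation:
  assumes "b = b0 + cscale c v" and "s \<ge> 0"
  shows "interaction_state b0 b \<rho> s
           = \<rho> + cscale c (comm_integral (interaction_op b0 v) 1 (interaction_state b0 b \<rho>) s)"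
proof -
  let ?P = "interaction_state b0 b \<rho>" and ?W = "interaction_op b0 v"
  let ?g = "\<lambda>\<tau>. ?W \<tau> * ?P \<tau> - ?P \<tau> * ?W \<tau>"
  have "((cscale c \<circ> ?g) has_integral (?P s - ?P 0)) {0..s}"
  proof (rule fundamental_theorem_of_calculus[OF \<open>s \<ge> 0\<close>])
    fix \<tau>
    have "interaction_op b0 (b - b0) \<tau> = cscale c (?W \<tau>)"
      by (simp add: assms(1) interaction_op_cscale)
    then show "(?P has_vector_derivative (cscale c \<circ> ?g) \<tau>) (at \<tau> within {0..s})"
      using interaction_state_has_vector_derivative[of b0 b \<rho> \<tau>]
      by (simp add: cscale_mult_left cscale_mult_right cscale_diff)
  qed
  then have "integral {0..s} (cscale c \<circ> ?g) = ?P s - \<rho>"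
    by (simp add: integral_unique)
  moreover have "integral {0..s} (cscale c \<circ> ?g) = cscale c (integral {0..s} ?g)"
    by (intro integral_linear bounded_linear_cscale integrable_continuous_real continuous_intros
        continuous_on_interaction_op continuous_on_interaction_state)
  ultimately show ?thesis by simp
qed

lemma expectation_interaction_state_le_norm:
  assumes "adj b0 = - b0" and "adj b = - b" and "density_matrix R"
  shows "cmod (tr (x * interaction_state b0 b (Abs_sqmat R) s)) \<le> norm x"
proof -
  let ?u = "exp (- (s *\<^sub>R b0)) * exp (s *\<^sub>R b)"
  have "adj ?u = exp (- (s *\<^sub>R b)) * exp (s *\<^sub>R b0)"
    using exp_skew_unitary(1)[OF assms(1), of "- s"] exp_skew_unitary(1)[OF assms(2), of s]
    by (simp add: adj_mult)
  moreover from this have "adj ?u * ?u = 1" and "?u * adj ?u = 1"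
    by (simp_all add: mult.assoc)
  ultimately show ?thesis
    using expectation_unitary_conj_le_norm[OF assms(3), of ?u x]
    by (simp add: interaction_state_def mult.assoc)
qed

lemma tr_mult_evolution_eq_interaction:
  "tr (obs * (exp (t *\<^sub>R b) * \<rho> * exp (- (t *\<^sub>R b))))
     = tr (interaction_op b0 obs t * interaction_state b0 b \<rho> t)"
proof -
  have "tr (interaction_op b0 obs t * interaction_state b0 b \<rho> t)
      = tr (exp (- (t *\<^sub>R b0)) * (obs * exp (t *\<^sub>R b) * \<rho> * exp (- (t *\<^sub>R b)) * exp (t *\<^sub>R b0)))"
    by (simp add: interaction_op_def interaction_state_def mult.assoc)
  also have "\<dots> = tr (obs * (exp (t *\<^sub>R b) * \<rho> * exp (- (t *\<^sub>R b))))"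
    by (subst tr_commute) (simp add: mult.assoc)
  finally show ?thesis ..
qed

lemma dyson_remainder_le:
  fixes b0 v obs :: "'n::finite sqmat" and c :: complex
  assumes skew_b0: "adj b0 = - b0" and "adj v = v" and "cnj c = - c"
    and density: "density_matrix R" and "t \<ge> 0"
  defines "b \<equiv> b0 + cscale c v" and "\<rho> \<equiv> Abs_sqmat R"
  shows "cmod (tr (obs * (exp (t *\<^sub>R b) * \<rho> * exp (- (t *\<^sub>R b))))
            - (\<Sum>k\<le>r. c ^ k * tr (interaction_op b0 obs t
                                   * comm_integral (interaction_op b0 v) k (\<lambda>_. \<rho>) t)))
         \<le> cmod c ^ Suc r * (norm obs * (2 * norm v) ^ Suc r * t ^ Suc r / fact (Suc r))"
proof -
  let ?W = "interaction_op b0 v" and ?P = "interaction_state b0 b \<rho>"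
  let ?obs = "interaction_op b0 obs t"
  have skew_b: "adj b = - b"
    using assms by (simp add: b_def adj_add adj_cscale cscale_uminus)
  have "tr (obs * (exp (t *\<^sub>R b) * \<rho> * exp (- (t *\<^sub>R b)))) = tr (?obs * ?P t)"
    by (rule tr_mult_evolution_eq_interaction)
  moreover have "?P t = (\<Sum>k\<le>r. cscale (c ^ k) (comm_integral ?W k (\<lambda>_. \<rho>) t))
      + cscale (c ^ Suc r) (comm_integral ?W (Suc r) ?P t)"
    using \<open>t \<ge> 0\<close>
    by (intro comm_integral_expansion continuous_on_interaction_op continuous_on_interaction_state
        interaction_state_integral_equation[OF b_def[THEN meta_eq_to_obj_eq]]) auto
  ultimately have remainder_eq: "tr (obs * (exp (t *\<^sub>R b) * \<rho> * exp (- (t *\<^sub>R b))))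
      - (\<Sum>k\<le>r. c ^ k * tr (?obs * comm_integral ?W k (\<lambda>_. \<rho>) t))
      = c ^ Suc r * tr (?obs * comm_integral ?W (Suc r) ?P t)"
    by (simp add: distrib_left tr_add cscale_mult_right tr_cscale
        tr_sum sum_distrib_left)
  have "cmod (tr (?obs * comm_integral ?W (Suc r) ?P t))
      \<le> norm ?obs * (1 * (2 * norm v) ^ Suc r / fact (Suc r)) * t ^ Suc r"
    using \<open>t \<ge> 0\<close> norm_interaction_op_le[OF skew_b0]
      expectation_interaction_state_le_norm[OF skew_b0 skew_b density]
    by (intro tr_mult_comm_integral_le continuous_on_interaction_op
        continuous_on_interaction_state) (auto simp: \<rho>_def)
  also have "\<dots> \<le> norm obs * (2 * norm v) ^ Suc r * t ^ Suc r / fact (Suc r)"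
    using norm_interaction_op_le[OF skew_b0, of obs t] \<open>t \<ge> 0\<close>
    by (simp add: divide_right_mono mult_right_mono)
  finally show ?thesis
    unfolding remainder_eq norm_mult norm_power by (rule mult_left_mono) simp
qed

lemma hermitian_add_noise:
  assumes "hermitian H0" and "hermitian V"
  shows "hermitian (H0 + cmat_scale (of_real \<delta>) V)"
  using assms by (simp add: hermitian_def adjoint_def cmat_scale_def vec_eq_iff)

lemma generator_add_noise:
  "generator (H0 + cmat_scale (of_real \<delta>) V) = generator H0 + cscale (- \<i> * of_real \<delta>) (Abs_sqmat V)"
  "generator (H0 + cmat_scale (of_real \<delta>) V) = generator H0 + \<delta> *\<^sub>R generator V"
  by (simp_all add: generator_def Rep_sqmat_inject[symmetric] plus_sqmat.rep_eq cscale.rep_eq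
      scaleR_sqmat.rep_eq Abs_sqmat_inverse vec_eq_iff cmat_scale_def
      scaleR_conv_of_real[where 'a=complex] algebra_simps)

lemma U0_eq_exp: "U0 H0 s = Rep_sqmat (exp (s *\<^sub>R generator H0))"
  unfolding U0_def by (rule mexp_eq_exp_generator)

lemma adjoint_Rep_exp_generator:
  assumes "hermitian H"
  shows "adjoint (Rep_sqmat (exp (s *\<^sub>R generator H))) = Rep_sqmat (exp (- (s *\<^sub>R generator H)))"
  using exp_skew_unitary(1)[OF adj_generator[OF assms], of s] by (simp add: adj.rep_eq[symmetric])

lemma interaction_eq_interaction_op:
  assumes "hermitian H0"
  shows "interaction H0 A s = Rep_sqmat (interaction_op (generator H0) (Abs_sqmat A) s)"
  unfolding interaction_def interaction_op_def
  by (simp add: U0_eq_exp adjoint_Rep_exp_generator[OF assms] times_sqmat.rep_eq Abs_sqmat_inverse)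

lemma evolve_eq_exp:
  fixes \<delta> :: real
  assumes "hermitian H0" and "hermitian V"
  defines "b \<equiv> generator (H0 + cmat_scale (of_real \<delta>) V)"
  shows "evolve H0 V \<rho> t \<delta> = Rep_sqmat (exp (t *\<^sub>R b) * Abs_sqmat \<rho> * exp (- (t *\<^sub>R b)))"
  unfolding evolve_def Let_def b_def mexp_eq_exp_generator
  by (simp add: adjoint_Rep_exp_generator[OF hermitian_add_noise[OF assms(1,2)]]
      times_sqmat.rep_eq Abs_sqmat_inverse)

lemma dyson_coeff_eq_comm_integral:
  assumes "hermitian H0" and "t \<ge> 0"
  defines "b0 \<equiv> generator H0"
  shows "(- \<i> * of_real \<delta>) ^ k * tr (interaction_op b0 (Abs_sqmat Obs) t
            * comm_integral (interaction_op b0 (Abs_sqmat V)) k (\<lambda>_. Abs_sqmat \<rho>) t)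
         = of_real (\<delta> ^ k) * dyson_coeff H0 V \<rho> Obs t k"
proof (cases "k = 0")
  case True
  have "dyson_coeff H0 V \<rho> Obs t 0
      = tr (Abs_sqmat Obs * exp (t *\<^sub>R b0) * Abs_sqmat \<rho> * exp (- (t *\<^sub>R b0)))"
    by (simp add: dyson_coeff_def U0_eq_exp adjoint_Rep_exp_generator[OF assms(1)] b0_def
        tr.rep_eq times_sqmat.rep_eq Abs_sqmat_inverse)
  also have "\<dots> = tr (interaction_op b0 (Abs_sqmat Obs) t * Abs_sqmat \<rho>)"
    unfolding interaction_op_def by (metis tr_commute mult.assoc)
  finally show ?thesis using True by simp
next
  case False
  let ?NC = "\<lambda>ts. Abs_sqmat (nested_comm H0 V \<rho> ts)"
  have "simplex_int k t (\<lambda>ts. trace (interaction H0 Obs t ** nested_comm H0 V \<rho> ts))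
      = simplex_int k t (\<lambda>ts. tr (interaction_op b0 (Abs_sqmat Obs) t * ?NC ts))"
    by (simp add: interaction_eq_interaction_op[OF assms(1)] b0_def tr.rep_eq times_sqmat.rep_eq
        Abs_sqmat_inverse)
  also have "\<dots> = tr (interaction_op b0 (Abs_sqmat Obs) t
      * comm_integral (interaction_op b0 (Abs_sqmat V)) k (\<lambda>_. Abs_sqmat \<rho>) t)"
    using \<open>t \<ge> 0\<close>
    by (intro simplex_int_eq_comm_integral continuous_on_interaction_op)
      (auto simp: commutator_def interaction_eq_interaction_op[OF assms(1)] b0_def
        times_sqmat.abs_eq[symmetric] minus_sqmat.abs_eq[symmetric] Rep_sqmat_inverse)
  moreover have "(- \<i> * of_real \<delta>) ^ k = (- \<i>) ^ k * of_real (\<delta> ^ k)"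
    by (simp only: power_mult_distrib of_real_power)
  ultimately show ?thesis
    using False by (simp add: dyson_coeff_def mult_ac)
qed

lemma dyson_remainder_pointwise_le:
  fixes H0 V \<rho> Obs :: "complex^'n::finite^'n"
  assumes "hermitian H0" and "hermitian V" and "density_matrix \<rho>" and "t \<ge> 0"
  shows "cmod (trace (Obs ** evolve H0 V \<rho> t \<delta>)
                - (\<Sum>k\<le>r. of_real (\<delta> ^ k) * dyson_coeff H0 V \<rho> Obs t k))
         \<le> spec_norm Obs * (2 * t) ^ (r + 1) * spec_norm V ^ (r + 1) * \<bar>\<delta> ^ (r + 1)\<bar> / fact (r + 1)"
proof -
  let ?b0 = "generator H0" and ?c = "- \<i> * complex_of_real \<delta>"
  let ?v = "Abs_sqmat V" and ?obs = "Abs_sqmat Obs"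
  have adj_v: "adj ?v = ?v"
    using assms(2) by (simp add: hermitian_def adj.abs_eq)
  have cnj_c: "cnj ?c = - ?c" by simp
  have "trace (Obs ** evolve H0 V \<rho> t \<delta>)
      = tr (?obs * (exp (t *\<^sub>R (?b0 + cscale ?c ?v)) * Abs_sqmat \<rho>
            * exp (- (t *\<^sub>R (?b0 + cscale ?c ?v)))))"
    by (simp add: evolve_eq_exp[OF assms(1,2)] generator_add_noise(1) tr.rep_eq times_sqmat.rep_eq
        Abs_sqmat_inverse)
  moreover have "(\<Sum>k\<le>r. ?c ^ k * tr (interaction_op ?b0 ?obs t
                     * comm_integral (interaction_op ?b0 ?v) k (\<lambda>_. Abs_sqmat \<rho>) t))
      = (\<Sum>k\<le>r. of_real (\<delta> ^ k) * dyson_coeff H0 V \<rho> Obs t k)"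
    by (rule sum.cong[OF refl]) (rule dyson_coeff_eq_comm_integral[OF assms(1,4)])
  ultimately have "cmod (trace (Obs ** evolve H0 V \<rho> t \<delta>)
                - (\<Sum>k\<le>r. of_real (\<delta> ^ k) * dyson_coeff H0 V \<rho> Obs t k))
      \<le> cmod ?c ^ Suc r * (norm ?obs * (2 * norm ?v) ^ Suc r * t ^ Suc r / fact (Suc r))"
    using dyson_remainder_le[OF adj_generator[OF assms(1)] adj_v cnj_c assms(3,4), of ?obs r]
    by simp
  then show ?thesis
    by (simp add: norm_sqmat.abs_eq norm_mult power_abs abs_mult power_mult_distrib field_simps)
qed

section \<open>Averaging over the noise\<close>

lemma continuous_on_evolve_entry:
  assumes "hermitian H0" and "hermitian V"
  shows "continuous_on UNIV (\<lambda>\<delta>. evolve H0 V \<rho> t \<delta> $ i $ j)"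
proof -
  let ?b = "\<lambda>\<delta>. generator H0 + \<delta> *\<^sub>R generator V"
  have "(\<lambda>\<delta>. evolve H0 V \<rho> t \<delta> $ i $ j)
      = (\<lambda>\<delta>. Rep_sqmat (exp (t *\<^sub>R ?b \<delta>) * Abs_sqmat \<rho> * exp (- (t *\<^sub>R ?b \<delta>))) $ i $ j)"
    by (simp add: evolve_eq_exp[OF assms] generator_add_noise(2))
  then show ?thesis by (simp only:) (intro continuous_intros)
qed

lemma evolve_entry_le:
  assumes "hermitian H0" and "hermitian V"
  shows "cmod (evolve H0 V \<rho> t \<delta> $ i $ j) \<le> spec_norm \<rho>"
proof -
  let ?b = "generator (H0 + cmat_scale (of_real \<delta>) V)"
  have skew: "adj ?b = - ?b" by (rule adj_generator[OF hermitian_add_noise[OF assms]])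
  have "cmod (evolve H0 V \<rho> t \<delta> $ i $ j) \<le> norm (exp (t *\<^sub>R ?b) * Abs_sqmat \<rho> * exp (- (t *\<^sub>R ?b)))"
    using matrix_entry_le_spec_norm by (simp add: evolve_eq_exp[OF assms] norm_sqmat.rep_eq)
  also have "\<dots> \<le> norm (exp (t *\<^sub>R ?b)) * norm (Abs_sqmat \<rho>) * norm (exp (- (t *\<^sub>R ?b)))"
    by (intro order.trans[OF norm_mult_ineq] mult_right_mono norm_mult_ineq norm_ge_zero)
  also have "\<dots> \<le> 1 * norm (Abs_sqmat \<rho>) * 1"
    using exp_skew_unitary(2)[OF skew, of t] exp_skew_unitary(2)[OF skew, of "- t"]
    by (intro mult_mono) auto
  finally show ?thesis by (simp add: norm_sqmat.abs_eq)
qed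

lemma integrable_evolve_entry:
  assumes "hermitian H0" and "hermitian V" and "prob_space D" and "sets D = sets borel"
  shows "integrable D (\<lambda>\<delta>. evolve H0 V \<rho> t \<delta> $ i $ j)"
proof -
  interpret prob_space D by fact
  have "(\<lambda>\<delta>. evolve H0 V \<rho> t \<delta> $ i $ j) \<in> borel_measurable D"
    using borel_measurable_continuous_onI[OF continuous_on_evolve_entry[OF assms(1,2)]]
      measurable_cong_sets[OF assms(4) refl] by blast
  then show ?thesis
    by (intro integrable_const_bound[where B="spec_norm \<rho>"])
      (simp_all add: evolve_entry_le[OF assms(1,2)])
qed

lemma trace_mult_avg_state:
  assumes "hermitian H0" and "hermitian V" and "prob_space D" and "sets D = sets borel"
  shows "integrable D (\<lambda>\<delta>. trace (Obs ** evolve H0 V \<rho> t \<delta>))"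
    and "trace (Obs ** avg_state D H0 V \<rho> t) = (\<integral>\<delta>. trace (Obs ** evolve H0 V \<rho> t \<delta>) \<partial>D)"
proof -
  have expand: "trace (A ** B) = (\<Sum>i\<in>UNIV. \<Sum>j\<in>UNIV. A $ i $ j * B $ j $ i)"
    for A B :: "complex^'n^'n"
    by (simp add: trace_def matrix_matrix_mult_def)
  have int: "integrable D (\<lambda>\<delta>. evolve H0 V \<rho> t \<delta> $ j $ i)" for i j
    by (rule integrable_evolve_entry[OF assms])
  then show "integrable D (\<lambda>\<delta>. trace (Obs ** evolve H0 V \<rho> t \<delta>))"
    unfolding expand by auto
  show "trace (Obs ** avg_state D H0 V \<rho> t) = (\<integral>\<delta>. trace (Obs ** evolve H0 V \<rho> t \<delta>) \<partial>D)"
    unfolding expand using int by (simp add: avg_state_def integrable_sum)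
qed

lemma remainder_le:
  fixes H0 V \<rho> Obs :: "complex^'n::finite^'n"
  assumes "hermitian H0" and "hermitian V" and "density_matrix \<rho>" and "t \<ge> 0"
    and "prob_space D" and "sets D = sets borel"
    and moments: "\<And>k. k \<ge> 1 \<Longrightarrow> integrable D (\<lambda>\<delta>. \<delta> ^ k)"
  shows "cmod (remainder r D H0 V \<rho> Obs t)
     \<le> spec_norm Obs * (2 * t) ^ (r + 1) * spec_norm V ^ (r + 1)
        * (\<integral>\<delta>. \<bar>\<delta> ^ (r + 1)\<bar> \<partial>D) / fact (r + 1)"
proof -
  interpret prob_space D by fact
  let ?F = "\<lambda>\<delta>. trace (Obs ** evolve H0 V \<rho> t \<delta>)"
  let ?S = "\<lambda>\<delta>. \<Sum>k\<le>r. complex_of_real (\<delta> ^ k) * dyson_coeff H0 V \<rho> Obs t k"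
  let ?K = "spec_norm Obs * (2 * t) ^ (r + 1) * spec_norm V ^ (r + 1)"
  have int_power: "integrable D (\<lambda>\<delta>. \<delta> ^ k)" for k
    using moments[of k] by (cases k) auto
  have int_F: "integrable D ?F" by (rule trace_mult_avg_state(1)[OF assms(1,2,5,6)])
  have int_S: "integrable D ?S"
    using int_power by (intro Bochner_Integration.integrable_sum integrable_mult_left integrable_of_real)
  have "(\<integral>\<delta>. ?S \<delta> \<partial>D) = (\<Sum>k\<le>r. \<integral>\<delta>. complex_of_real (\<delta> ^ k) * dyson_coeff H0 V \<rho> Obs t k \<partial>D)"
    using int_power
    by (intro Bochner_Integration.integral_sum integrable_mult_left integrable_of_real)
  also have "\<dots> = (\<Sum>k\<le>r. complex_of_real (\<integral>\<delta>. \<delta> ^ k \<partial>D) * dyson_coeff H0 V \<rho> Obs t k)"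
    by (simp only: integral_mult_left_zero integral_complex_of_real)
  finally have "remainder r D H0 V \<rho> Obs t = (\<integral>\<delta>. ?F \<delta> \<partial>D) - (\<integral>\<delta>. ?S \<delta> \<partial>D)"
    unfolding remainder_def trace_mult_avg_state(2)[OF assms(1,2,5,6)] by simp
  also have "\<dots> = (\<integral>\<delta>. ?F \<delta> - ?S \<delta> \<partial>D)"
    by (rule Bochner_Integration.integral_diff[OF int_F int_S, symmetric])
  also have "cmod \<dots> \<le> (\<integral>\<delta>. cmod (?F \<delta> - ?S \<delta>) \<partial>D)"
    by (rule integral_norm_bound)
  also have "\<dots> \<le> (\<integral>\<delta>. ?K * \<bar>\<delta> ^ (r + 1)\<bar> / fact (r + 1) \<partial>D)"
    using int_F int_S int_power[of "r + 1"]
    by (intro integral_mono dyson_remainder_pointwise_le[OF assms(1-4)]) auto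
  finally show ?thesis by simp
qed

section \<open>Richardson extrapolation\<close>

lemma less_if_Suc_less_upto:
  fixes \<theta> :: "nat \<Rightarrow> 'a::order"
  assumes "\<forall>i<r. \<theta> i < \<theta> (Suc i)" and "i < k" and "k \<le> r"
  shows "\<theta> i < \<theta> k"
  using assms(2,3)
proof (induction k)
  case (Suc k)
  then show ?case using assms(1) by (cases "i = k") (auto intro: less_trans)
qed simp

lemma inj_on_if_Suc_less_upto:
  fixes \<theta> :: "nat \<Rightarrow> 'a::linorder"
  assumes "\<forall>i<r. \<theta> i < \<theta> (Suc i)"
  shows "inj_on \<theta> {0..r}"
proof (rule inj_onI)
  fix i k assume "i \<in> {0..r}" "k \<in> {0..r}" "\<theta> i = \<theta> k"
  then show "i = k"
    using less_if_Suc_less_upto[OF assms, of i k] less_if_Suc_less_upto[OF assms, of k i]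
    by (cases i k rule: linorder_cases) auto
qed

lemma lagrange_interpolation:
  fixes \<theta> :: "nat \<Rightarrow> 'a::field" and p :: "'a poly"
  assumes inj: "inj_on \<theta> {0..r}" and "degree p \<le> r"
  shows "poly p x = (\<Sum>i\<le>r. poly p (\<theta> i) * (\<Prod>k\<in>{0..r} - {i}. (x - \<theta> k) / (\<theta> i - \<theta> k)))"
proof -
  define L where "L i = (\<Prod>k\<in>{0..r} - {i}. [:- \<theta> k, 1:])" for i
  define d where "d i = (\<Prod>k\<in>{0..r} - {i}. \<theta> i - \<theta> k)" for i
  define q where "q = (\<Sum>i\<le>r. smult (poly p (\<theta> i) / d i) (L i))"
  have poly_L: "poly (L i) y = (\<Prod>k\<in>{0..r} - {i}. y - \<theta> k)" for i y
    unfolding L_def by (simp add: poly_prod)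
  have poly_q: "poly q y = (\<Sum>i\<le>r. poly p (\<theta> i) * (\<Prod>k\<in>{0..r} - {i}. (y - \<theta> k) / (\<theta> i - \<theta> k)))"
    for y
    by (simp add: q_def poly_sum poly_L d_def prod_dividef)
  have "degree (L i) \<le> r" if "i \<le> r" for i
  proof -
    have "degree (L i) \<le> sum (degree \<circ> (\<lambda>k. [:- \<theta> k, 1:])) ({0..r} - {i})"
      unfolding L_def by (rule degree_prod_sum_le) simp
    also have "\<dots> = r" using that by simp
    finally show ?thesis .
  qed
  then have "degree q \<le> r"
    unfolding q_def by (intro degree_sum_le) (auto intro: order.trans[OF degree_smult_le])
  moreover have "poly q (\<theta> j) = poly p (\<theta> j)" if "j \<le> r" for j
  proof -
    have "(\<Prod>k\<in>{0..r} - {i}. (\<theta> j - \<theta> k) / (\<theta> i - \<theta> k)) = 0" if "i \<le> r" "i \<noteq> j" for i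
      by (rule prod_zero) (use \<open>j \<le> r\<close> that in auto)
    then have "poly q (\<theta> j)
        = (\<Sum>i\<in>{j}. poly p (\<theta> i) * (\<Prod>k\<in>{0..r} - {i}. (\<theta> j - \<theta> k) / (\<theta> i - \<theta> k)))"
      unfolding poly_q by (intro sum.mono_neutral_right) (use \<open>j \<le> r\<close> in auto)
    moreover have "(\<Prod>k\<in>{0..r} - {j}. (\<theta> j - \<theta> k) / (\<theta> j - \<theta> k)) = 1"
      by (rule prod.neutral) (use inj \<open>j \<le> r\<close> in \<open>auto dest: inj_onD\<close>)
    ultimately show ?thesis by simp
  qed
  ultimately have "q = p"
    using card_image[OF inj] assms(2)
    by (intro poly_eqI_degree[where A="\<theta> ` {0..r}"]) auto
  then show ?thesis by (simp flip: poly_q)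
qed

lemma richardson_coeff_sum_poly:
  fixes \<theta> :: "nat \<Rightarrow> real" and p :: "real poly"
  assumes "inj_on \<theta> {0..r}" and "degree p \<le> r"
  shows "(\<Sum>i\<le>r. richardson_coeff r \<theta> i * poly p (\<theta> i)) = poly p 0"
proof -
  have "(\<Prod>k\<in>{0..r} - {i}. (0 - \<theta> k) / (\<theta> i - \<theta> k)) = richardson_coeff r \<theta> i" for i
    unfolding richardson_coeff_def
  proof (rule prod.cong[OF refl])
    fix k
    have "\<theta> i - \<theta> k = - (\<theta> k - \<theta> i)" by simp
    then show "(0 - \<theta> k) / (\<theta> i - \<theta> k) = \<theta> k / (\<theta> k - \<theta> i)"
      by (simp only: diff_0 minus_divide_divide)
  qed
  then show ?thesis
    unfolding lagrange_interpolation[OF assms, of 0] by (simp add: mult.commute)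
qed

section \<open>Gaussian projection noise\<close>

lemma erf_has_real_derivative: "(erf has_real_derivative 2 / sqrt pi * exp (- (x\<^sup>2))) (at x)"
proof -
  let ?a = "min x 0 - 1" and ?b = "max x 0 + 1"
  have "((\<lambda>u. LBINT y=(0::real)..u. exp (- (y\<^sup>2))) has_vector_derivative exp (- (x\<^sup>2)))
      (at x within {?a..?b})"
    by (rule interval_integral_FTC2) (auto intro!: continuous_intros)
  moreover have "at x within {?a..?b} = at x" by (rule at_within_Icc_at) auto
  ultimately have "((\<lambda>u. LBINT y=(0::real)..u. exp (- (y\<^sup>2))) has_real_derivative exp (- (x\<^sup>2))) (at x)"
    by (simp add: has_real_derivative_iff_has_vector_derivative)
  then show ?thesis
    unfolding erf_def[abs_def] zero_ereal_def by (rule DERIV_cmult)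
qed

lemma erf_0 [simp]: "erf 0 = 0"
  by (simp add: erf_def zero_ereal_def)

lemma erf_strict_mono: "x < y \<Longrightarrow> erf x < erf y"
  by (rule DERIV_pos_imp_increasing) (auto intro: erf_has_real_derivative)

lemma isCont_erf: "isCont erf x"
  using erf_has_real_derivative DERIV_isCont by blast

lemma interval_integral_gaussian_symmetric:
  assumes "x \<ge> 0"
  shows "(LBINT y=-x..x. exp (- (y\<^sup>2))) = sqrt pi * erf x"
proof -
  have "interval_lebesgue_integrable lborel (min (ereal (- x)) (min (ereal 0) (ereal x)))
      (max (ereal (- x)) (max (ereal 0) (ereal x))) (\<lambda>y. exp (- (y\<^sup>2)))"
    using assms by (simp add: min_def max_def) (rule interval_integrable_isCont, simp)
  then have "(LBINT y=-x..(0::real). exp (- (y\<^sup>2))) + (LBINT y=(0::real)..x. exp (- (y\<^sup>2)))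
      = (LBINT y=-x..x. exp (- (y\<^sup>2)))"
    by (rule interval_integral_sum)
  moreover have "(LBINT y=-x..(0::real). exp (- (y\<^sup>2))) = (LBINT y=(0::real)..x. exp (- (y\<^sup>2)))"
    using interval_integral_reflect[of "- x" 0 "\<lambda>y. exp (- (y\<^sup>2))"] by (simp add: zero_ereal_def)
  ultimately show ?thesis by (simp add: erf_def zero_ereal_def)
qed

lemma prob_abs_le_eq_erf:
  assumes "prob_space M" and Z: "distributed M lborel Z (normal_density 0 (1 / sqrt 2))"
    and "x \<ge> 0"
  shows "measure M {\<omega>\<in>space M. \<bar>Z \<omega>\<bar> \<le> x} = erf x"
proof -
  let ?f = "normal_density 0 (1 / sqrt 2)"
  have "{\<omega>\<in>space M. \<bar>Z \<omega>\<bar> \<le> x} = Z -` {-x..x} \<inter> space M" by auto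
  then have "emeasure M {\<omega>\<in>space M. \<bar>Z \<omega>\<bar> \<le> x}
      = (\<integral>\<^sup>+y. ennreal (?f y) * indicator {-x..x} y \<partial>lborel)"
    using distributed_emeasure[OF Z, of "{-x..x}"] by simp
  also have "\<dots> = (\<integral>\<^sup>+y. ennreal (indicator {-x..x} y *\<^sub>R ?f y) \<partial>lborel)"
    by (intro nn_integral_cong) (auto simp: indicator_def)
  also have "\<dots> = ennreal (LBINT y:{-x..x}. ?f y)"
    unfolding set_lebesgue_integral_def
  proof (rule nn_integral_eq_integral)
    have "set_integrable lborel {-x..x} ?f"
      by (rule borel_integrable_atLeastAtMost') (simp add: normal_density_def continuous_intros)
    then show "integrable lborel (\<lambda>y. indicator {-x..x} y *\<^sub>R ?f y)"
      by (simp add: set_integrable_def)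
  qed (simp add: normal_density_nonneg)
  also have "(LBINT y:{-x..x}. ?f y) = (LBINT y=-x..x. ?f y)"
    using \<open>x \<ge> 0\<close> by (simp add: interval_integral_Icc)
  also have "\<dots> = 1 / sqrt pi * (LBINT y=-x..x. exp (- (y\<^sup>2)))"
    by (simp add: normal_density_def power_divide)
  also have "\<dots> = erf x"
    using interval_integral_gaussian_symmetric[OF \<open>x \<ge> 0\<close>] by simp
  finally have "emeasure M {\<omega>\<in>space M. \<bar>Z \<omega>\<bar> \<le> x} = ennreal (erf x)" .
  moreover have "erf x \<ge> 0" using erf_strict_mono[of 0 x] \<open>x \<ge> 0\<close> by (cases "x = 0") auto
  ultimately show ?thesis by (simp add: measure_def)
qed

lemma erf_erf_inv:
  assumes "0 < y" and "y < 1"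
  shows "erf (erf_inv y) = y" and "erf_inv y \<ge> 0"
proof -
  let ?M = "density lborel (normal_density 0 (1 / sqrt 2))"
  interpret prob_space ?M by (rule prob_space_normal_density) simp
  have "distributed ?M lborel (\<lambda>x. x) (normal_density 0 (1 / sqrt 2))"
    unfolding distributed_def by (simp add: distr_id2 measurable_ident_sets)
  moreover have "{x\<in>space ?M. \<bar>x\<bar> \<le> real n} = {- real n..real n}" for n
    by auto
  ultimately have erf_eq: "erf (real n) = measure ?M {- real n..real n}" for n
    using prob_abs_le_eq_erf[OF prob_space_axioms, of "\<lambda>x. x" "real n"] by simp
  have "(\<lambda>n. measure ?M {- real n..real n}) \<longlonglongrightarrow> measure ?M (\<Union>n. {- real n..real n})"
    by (intro finite_Lim_measure_incseq) (auto simp: incseq_def)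
  moreover have "(\<Union>n. {- real n..real n}) = UNIV"
  proof -
    have "\<exists>n. \<bar>x\<bar> \<le> real n" for x :: real by (rule real_arch_simple)
    then show ?thesis by (force simp: abs_le_iff)
  qed
  moreover have "measure ?M UNIV = 1"
    using prob_space by (simp only: space_density space_lborel space_borel)
  ultimately have "(\<lambda>n. erf (real n)) \<longlonglongrightarrow> 1"
    by (simp only: erf_eq)
  then have "\<forall>\<^sub>F n in sequentially. erf (real n) > y"
    by (rule order_tendstoD(1)) (use \<open>y < 1\<close> in simp)
  then obtain n where "erf (real n) > y"
    by (auto simp: eventually_sequentially)
  then have "\<exists>x\<ge>0. x \<le> real n \<and> erf x = y"
    by (intro IVT) (use \<open>0 < y\<close> isCont_erf in auto)
  then obtain x where x: "0 \<le> x" "erf x = y" by blast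
  have "erf x' \<noteq> erf x" if "x' \<noteq> x" for x'
    using erf_strict_mono[of x' x] erf_strict_mono[of x x'] that by (cases "x' < x") auto
  then have "erf_inv y = x"
    unfolding erf_inv_def using x(2) by (intro the_equality) blast+
  then show "erf (erf_inv y) = y" and "erf_inv y \<ge> 0" using x by simp_all
qed

lemma (in prob_space) distributed_weighted_sum_normal:
  assumes "finite I" and "I \<noteq> {}" and indep: "indep_vars (\<lambda>_. borel) \<xi> I"
    and normal: "\<And>i. i \<in> I \<Longrightarrow> \<nu> i > 0 \<and> distributed M lborel (\<xi> i) (normal_density 0 (\<nu> i))"
    and weights: "\<And>i. i \<in> I \<Longrightarrow> g i \<noteq> 0"
  shows "distributed M lborel (\<lambda>\<omega>. \<Sum>i\<in>I. g i * \<xi> i \<omega>)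
           (normal_density 0 (sqrt (\<Sum>i\<in>I. (\<bar>g i\<bar> * \<nu> i)\<^sup>2)))"
proof -
  have "distributed M lborel (\<lambda>\<omega>. g i * \<xi> i \<omega>) (normal_density 0 (\<bar>g i\<bar> * \<nu> i))" if "i \<in> I" for i
    using normal_density_affine[of "\<xi> i" 0 "\<nu> i" "g i" 0] normal[OF that] weights[OF that] by simp
  moreover have "indep_vars (\<lambda>_. borel) (\<lambda>i \<omega>. g i * \<xi> i \<omega>) I"
    using indep by (rule indep_vars_compose2[where Y="\<lambda>i x. g i * x" and N="\<lambda>_. borel"]) simp
  ultimately show ?thesis
    using sum_indep_normal[of I "\<lambda>i \<omega>. g i * \<xi> i \<omega>" "\<lambda>i. \<bar>g i\<bar> * \<nu> i" "\<lambda>_. 0"] assms(1,2)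
      normal weights by simp
qed

lemma (in prob_space) prob_abs_normal_le_erf:
  assumes X: "distributed M lborel X (normal_density 0 \<sigma>)" and "\<sigma> > 0" and "x \<ge> 0"
  shows "measure M {\<omega>\<in>space M. \<bar>X \<omega>\<bar> \<le> sqrt 2 * \<sigma> * x} = erf x"
proof -
  have Z: "distributed M lborel (\<lambda>\<omega>. X \<omega> / (sqrt 2 * \<sigma>)) (normal_density 0 (1 / sqrt 2))"
    using normal_density_affine[OF X \<open>\<sigma> > 0\<close>, of "1 / (sqrt 2 * \<sigma>)" 0] \<open>\<sigma> > 0\<close> by simp
  have "{\<omega>\<in>space M. \<bar>X \<omega>\<bar> \<le> sqrt 2 * \<sigma> * x} = {\<omega>\<in>space M. \<bar>X \<omega> / (sqrt 2 * \<sigma>)\<bar> \<le> x}"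
    using \<open>\<sigma> > 0\<close> by (auto simp: abs_div pos_divide_le_eq mult.commute)
  then show ?thesis by (simp only: prob_abs_le_eq_erf[OF prob_space_axioms Z \<open>x \<ge> 0\<close>])
qed

text \<open>The weighted sum is normal with standard deviation
  \<open>\<sigma> = (\<Sum> g\<^sub>i\<^sup>2 \<nu>\<^sub>i\<^sup>2)\<^sup>1\<^sup>/\<^sup>2 \<le> \<Sum> |g\<^sub>i| \<nu>\<^sub>i\<close>.\<close>

lemma (in prob_space) prob_abs_weighted_sum_normal_le:
  fixes r :: nat and \<xi> :: "nat \<Rightarrow> 'a \<Rightarrow> real"
  assumes indep: "indep_vars (\<lambda>_. borel) \<xi> {0..r}"
    and normal: "\<forall>i\<le>r. \<nu> i > 0 \<and> distributed M lborel (\<xi> i) (normal_density 0 (\<nu> i))"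
    and "\<exists>i\<le>r. g i \<noteq> 0" and "0 < \<epsilon>" and "\<epsilon> < 1"
  shows "measure M {\<omega>\<in>space M. \<bar>\<Sum>i\<le>r. g i * \<xi> i \<omega>\<bar>
                      \<le> sqrt 2 * erf_inv (1 - \<epsilon>) * (\<Sum>i\<le>r. \<bar>g i\<bar> * \<nu> i)} \<ge> 1 - \<epsilon>"
proof -
  define I where "I = {i. i \<le> r \<and> g i \<noteq> 0}"
  define \<sigma> where "\<sigma> = sqrt (\<Sum>i\<in>I. (\<bar>g i\<bar> * \<nu> i)\<^sup>2)"
  let ?e = "erf_inv (1 - \<epsilon>)" and ?S = "\<lambda>\<omega>. \<Sum>i\<le>r. g i * \<xi> i \<omega>"
  have "finite I" by (rule finite_subset[of _ "{..r}"]) (auto simp: I_def)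
  have "I \<noteq> {}" using assms(3) by (auto simp: I_def)
  have pos: "0 < \<bar>g i\<bar> * \<nu> i" if "i \<in> I" for i using normal that by (auto simp: I_def)
  then have "\<sigma> > 0"
    unfolding \<sigma>_def using \<open>finite I\<close> \<open>I \<noteq> {}\<close>
    by (intro real_sqrt_gt_zero sum_pos zero_less_power pos) auto
  have sum_I: "?S \<omega> = (\<Sum>i\<in>I. g i * \<xi> i \<omega>)" for \<omega>
    by (rule sum.mono_neutral_right) (auto simp: I_def)
  have "distributed M lborel ?S (normal_density 0 \<sigma>)"
    unfolding \<sigma>_def sum_I using normal \<open>finite I\<close> \<open>I \<noteq> {}\<close>
    by (intro distributed_weighted_sum_normal indep_vars_subset[OF indep]) (auto simp: I_def)
  moreover have "?e \<ge> 0" using erf_erf_inv(2) assms(4,5) by simp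
  ultimately have prob: "measure M {\<omega>\<in>space M. \<bar>?S \<omega>\<bar> \<le> sqrt 2 * \<sigma> * ?e} = 1 - \<epsilon>"
    using prob_abs_normal_le_erf[of ?S \<sigma> ?e] erf_erf_inv(1) assms(4,5) \<open>\<sigma> > 0\<close> by simp
  have "\<sigma> \<le> (\<Sum>i\<in>I. \<bar>g i\<bar> * \<nu> i)"
    unfolding \<sigma>_def using pos by (simp add: L2_set_def[symmetric] L2_set_le_sum less_imp_le)
  also have "\<dots> \<le> (\<Sum>i\<le>r. \<bar>g i\<bar> * \<nu> i)"
    using normal by (intro sum_mono2) (auto simp: I_def less_imp_le)
  finally have scale: "sqrt 2 * \<sigma> * ?e \<le> sqrt 2 * ?e * (\<Sum>i\<le>r. \<bar>g i\<bar> * \<nu> i)"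
    using mult_right_mono[of \<sigma> "\<Sum>i\<le>r. \<bar>g i\<bar> * \<nu> i" "sqrt 2 * ?e"] \<open>?e \<ge> 0\<close>
    by (simp add: mult_ac)
  have subset: "{\<omega>\<in>space M. \<bar>?S \<omega>\<bar> \<le> sqrt 2 * \<sigma> * ?e}
      \<subseteq> {\<omega>\<in>space M. \<bar>?S \<omega>\<bar> \<le> sqrt 2 * ?e * (\<Sum>i\<le>r. \<bar>g i\<bar> * \<nu> i)}"
    using scale by (auto intro: order.trans)
  have "\<xi> i \<in> borel_measurable M" if "i \<le> r" for i
    using distributed_measurable[of M lborel "\<xi> i"] normal that by auto
  then have [measurable]: "?S \<in> borel_measurable M"
    by (intro borel_measurable_sum borel_measurable_times borel_measurable_const) auto
  have "{\<omega>\<in>space M. \<bar>?S \<omega>\<bar> \<le> sqrt 2 * ?e * (\<Sum>i\<le>r. \<bar>g i\<bar> * \<nu> i)} \<in> sets M"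
    by measurable
  then show ?thesis using finite_measure_mono[OF subset] prob by simp
qed

lemma (in prob_space) prob_shifted_weighted_sum_normal_le:
  fixes r :: nat and \<xi> :: "nat \<Rightarrow> 'a \<Rightarrow> real"
  assumes indep: "indep_vars (\<lambda>_. borel) \<xi> {0..r}"
    and normal: "\<forall>i\<le>r. \<nu> i > 0 \<and> distributed M lborel (\<xi> i) (normal_density 0 (\<nu> i))"
    and "\<exists>i\<le>r. g i \<noteq> 0" and "0 < \<epsilon>" and "\<epsilon> < 1"
    and B: "cmod z + sqrt 2 * erf_inv (1 - \<epsilon>) * (\<Sum>i\<le>r. \<bar>g i\<bar> * \<nu> i) \<le> B"
  shows "measure M {\<omega>\<in>space M. cmod (z + of_real (\<Sum>i\<le>r. g i * \<xi> i \<omega>)) \<le> B} \<ge> 1 - \<epsilon>"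
proof -
  let ?S = "\<lambda>\<omega>. \<Sum>i\<le>r. g i * \<xi> i \<omega>"
  have "\<xi> i \<in> borel_measurable M" if "i \<le> r" for i
    using distributed_measurable[of M lborel "\<xi> i"] normal that by auto
  then have [measurable]: "?S \<in> borel_measurable M"
    by (intro borel_measurable_sum borel_measurable_times borel_measurable_const) auto
  have "{\<omega>\<in>space M. \<bar>?S \<omega>\<bar> \<le> sqrt 2 * erf_inv (1 - \<epsilon>) * (\<Sum>i\<le>r. \<bar>g i\<bar> * \<nu> i)}
      \<subseteq> {\<omega>\<in>space M. cmod (z + of_real (?S \<omega>)) \<le> B}"
  proof safe
    fix \<omega> assume "\<bar>?S \<omega>\<bar> \<le> sqrt 2 * erf_inv (1 - \<epsilon>) * (\<Sum>i\<le>r. \<bar>g i\<bar> * \<nu> i)"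
    moreover have "cmod (z + of_real (?S \<omega>)) \<le> cmod z + \<bar>?S \<omega>\<bar>"
      using norm_triangle_ineq[of z "of_real (?S \<omega>)"] by (simp only: norm_of_real)
    ultimately show "cmod (z + of_real (?S \<omega>)) \<le> B" using B by linarith
  qed
  moreover have "{\<omega>\<in>space M. cmod (z + of_real (?S \<omega>)) \<le> B} \<in> sets M"
    by measurable
  ultimately show ?thesis
    using prob_abs_weighted_sum_normal_le[OF assms(1-5)] finite_measure_mono by (meson order.trans)
qed

section \<open>Extrapolating a mitigable family\<close>

lemma lower_bound_if_Suc_less_upto:
  fixes \<theta> :: "nat \<Rightarrow> 'a::linorder"
  assumes "\<forall>i<r. \<theta> i < \<theta> (Suc i)" and "c \<le> \<theta> 0" and "i \<le> r"
  shows "c \<le> \<theta> i"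
  using less_if_Suc_less_upto[OF assms(1), of 0 i] assms(2,3) by (cases "i = 0") auto

text \<open>Richardson extrapolation is exact on the moments \<open>E\<^sub>\<theta>[\<delta>\<^sup>k]\<close>, \<open>k \<le> r\<close>, because they are
  polynomials of degree at most \<open>k\<close> in \<open>\<theta>\<close>.\<close>

lemma richardson_coeff_sum_moment:
  assumes mitigable: "mitigable D"
    and increasing: "\<forall>i<r. \<theta> i < \<theta> (Suc i)" and "0 \<le> \<theta> 0" and "k \<le> r"
  shows "(\<Sum>i\<le>r. richardson_coeff r \<theta> i * (\<integral>\<delta>. \<delta> ^ k \<partial>D (\<theta> i))) = (\<integral>\<delta>. \<delta> ^ k \<partial>D 0)"
proof (cases "k = 0")
  case True
  have "prob_space (D x)" if "x \<ge> 0" for x using mitigable that by (simp add: mitigable_def)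
  then show ?thesis
    using richardson_coeff_sum_poly[OF inj_on_if_Suc_less_upto[OF increasing], of 1] True
      lower_bound_if_Suc_less_upto[OF increasing \<open>0 \<le> \<theta> 0\<close>]
    by (simp add: prob_space.prob_space)
next
  case False
  then have "k \<ge> 1" by simp
  then obtain p :: "real poly"
    where "degree p \<le> k" and "\<forall>x\<ge>0. (\<integral>\<delta>. \<delta> ^ k \<partial>D x) = poly p x"
    using mitigable unfolding mitigable_def by blast
  then show ?thesis
    using richardson_coeff_sum_poly[OF inj_on_if_Suc_less_upto[OF increasing], of p] \<open>k \<le> r\<close>
      lower_bound_if_Suc_less_upto[OF increasing \<open>0 \<le> \<theta> 0\<close>]
    by simp
qed

context
  fixes H0 V \<rho> Obs :: "complex^'n::finite^'n" and t :: real and D :: "real \<Rightarrow> real measure"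
  assumes hermitian_H0: "hermitian H0" and hermitian_V: "hermitian V"
    and density: "density_matrix \<rho>" and "t \<ge> 0" and mitigable: "mitigable D"
begin

lemma remainder_le_mitigable:
  assumes "x \<ge> 0"
  shows "cmod (remainder r (D x) H0 V \<rho> Obs t)
    \<le> spec_norm Obs * (2 * t) ^ (r + 1) * spec_norm V ^ (r + 1)
       * (\<integral>\<delta>. \<bar>\<delta> ^ (r + 1)\<bar> \<partial>D x) / fact (r + 1)"
  using mitigable assms \<open>t \<ge> 0\<close>
  by (intro remainder_le hermitian_H0 hermitian_V density) (auto simp: mitigable_def)

lemma remainder_noiseless: "remainder r (D 0) H0 V \<rho> Obs t = 0"
proof -
  have "(\<integral>\<delta>. \<bar>\<delta> ^ (r + 1)\<bar> \<partial>D 0) = 0"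
    using mitigable by (intro integral_eq_zero_AE) (auto simp: mitigable_def elim: AE_mp)
  then show ?thesis using remainder_le_mitigable[of 0 r] by simp
qed

lemma richardson_extrapolation_error:
  assumes "\<forall>i<r. \<theta> i < \<theta> (Suc i)" and "0 \<le> \<theta> 0"
  defines "T \<equiv> \<lambda>x. trace (Obs ** avg_state (D x) H0 V \<rho> t)"
    and "R \<equiv> \<lambda>x. remainder r (D x) H0 V \<rho> Obs t"
  shows "(\<Sum>i\<le>r. of_real (richardson_coeff r \<theta> i) * T (\<theta> i)) - T 0
           = (\<Sum>i\<le>r. of_real (richardson_coeff r \<theta> i) * R (\<theta> i))"
proof -
  let ?\<gamma> = "richardson_coeff r \<theta>" and ?a = "dyson_coeff H0 V \<rho> Obs t"
  have T: "T x = R x + (\<Sum>k\<le>r. of_real (\<integral>\<delta>. \<delta> ^ k \<partial>D x) * ?a k)" for x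
    by (simp add: T_def R_def remainder_def)
  have "(\<Sum>i\<le>r. \<Sum>k\<le>r. of_real (?\<gamma> i) * (of_real (\<integral>\<delta>. \<delta> ^ k \<partial>D (\<theta> i)) * ?a k))
      = (\<Sum>k\<le>r. of_real (\<Sum>i\<le>r. ?\<gamma> i * (\<integral>\<delta>. \<delta> ^ k \<partial>D (\<theta> i))) * ?a k)"
    by (subst sum.swap) (simp add: sum_distrib_right mult.assoc)
  also have "\<dots> = T 0 - R 0"
    using T[of 0] by (simp add: richardson_coeff_sum_moment[OF mitigable assms(1,2)])
  finally show ?thesis
    using remainder_noiseless by (simp add: T[of "\<theta> _"] R_def distrib_left sum.distrib sum_distrib_left)
qed

end

theorem theorem1:
  fixes H0 V \<rho>0 Obs :: "complex^'n^'n"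
    and D :: "real \<Rightarrow> real measure"
    and t \<epsilon> :: real and r :: nat
    and \<theta> \<nu> :: "nat \<Rightarrow> real"
    and M :: "'w measure" and \<xi> :: "nat \<Rightarrow> 'w \<Rightarrow> real"
  assumes "hermitian H0" and "hermitian V" and "density_matrix \<rho>0" and "hermitian Obs"
    and "t \<ge> 0"
    and "mitigable D"
    and "0 \<le> \<theta> 0" and "\<forall>i<r. \<theta> i < \<theta> (Suc i)"
    and "prob_space M"
    and "prob_space.indep_vars M (\<lambda>_. borel) \<xi> {0..r}"
    and "\<forall>i\<le>r. \<nu> i > 0 \<and> distributed M lborel (\<xi> i) (normal_density 0 (\<nu> i))"
    and "0 < \<epsilon>" and "\<epsilon> < 1"
  shows "measure M {\<omega> \<in> space M.
            cmod ((\<Sum>i\<le>r. of_real (richardson_coeff r \<theta> i) *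
                     (trace (Obs ** avg_state (D (\<theta> i)) H0 V \<rho>0 t) + of_real (\<xi> i \<omega>)))
                  - trace (Obs ** avg_state (D 0) H0 V \<rho>0 t))
            \<le> (\<Sum>i\<le>r. \<bar>richardson_coeff r \<theta> i\<bar> *
                  (cmod (remainder r (D (\<theta> i)) H0 V \<rho>0 Obs t)
                   + sqrt 2 * \<nu> i * erf_inv (1 - \<epsilon>)))} \<ge> 1 - \<epsilon>
       \<and> (\<forall>i\<le>r. cmod (remainder r (D (\<theta> i)) H0 V \<rho>0 Obs t)
              \<le> spec_norm Obs * (2 * t) ^ (r + 1) * spec_norm V ^ (r + 1)
                 * integral\<^sup>L (D (\<theta> i)) (\<lambda>\<delta>. \<bar>\<delta> ^ (r + 1)\<bar>) / fact (r + 1))"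
proof -
  let ?\<gamma> = "richardson_coeff r \<theta>" and ?e = "erf_inv (1 - \<epsilon>)"
  let ?R = "\<lambda>i. remainder r (D (\<theta> i)) H0 V \<rho>0 Obs t"
  let ?T = "\<lambda>x. trace (Obs ** avg_state (D x) H0 V \<rho>0 t)"
  have "(\<Sum>i\<le>r. ?\<gamma> i) = 1"
    using richardson_coeff_sum_poly[OF inj_on_if_Suc_less_upto[OF assms(8)], of 1] by simp
  then have "\<exists>i\<le>r. ?\<gamma> i \<noteq> 0"
    by (metis (no_types, lifting) atMost_iff sum.neutral zero_neq_one)
  moreover have "cmod (\<Sum>i\<le>r. of_real (?\<gamma> i) * ?R i) + sqrt 2 * ?e * (\<Sum>i\<le>r. \<bar>?\<gamma> i\<bar> * \<nu> i)
      \<le> (\<Sum>i\<le>r. \<bar>?\<gamma> i\<bar> * (cmod (?R i) + sqrt 2 * \<nu> i * ?e))"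
    by (rule order.trans[OF add_right_mono[OF norm_sum]])
      (simp add: norm_mult distrib_left sum.distrib sum_distrib_left mult_ac)
  ultimately have "measure M {\<omega>\<in>space M. cmod ((\<Sum>i\<le>r. of_real (?\<gamma> i) * ?R i)
        + of_real (\<Sum>i\<le>r. ?\<gamma> i * \<xi> i \<omega>)) \<le> (\<Sum>i\<le>r. \<bar>?\<gamma> i\<bar> * (cmod (?R i) + sqrt 2 * \<nu> i * ?e))}
      \<ge> 1 - \<epsilon>"
    by (intro prob_space.prob_shifted_weighted_sum_normal_le[OF assms(9,10,11)] assms(12,13))
  moreover have "(\<Sum>i\<le>r. of_real (?\<gamma> i) * (?T (\<theta> i) + of_real (\<xi> i \<omega>))) - ?T 0
      = (\<Sum>i\<le>r. of_real (?\<gamma> i) * ?R i) + of_real (\<Sum>i\<le>r. ?\<gamma> i * \<xi> i \<omega>)" for \<omega>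
    using richardson_extrapolation_error[OF assms(1-3,5,6,8,7), of Obs]
    by (simp add: distrib_left sum.distrib algebra_simps)
  moreover have "cmod (?R i) \<le> spec_norm Obs * (2 * t) ^ (r + 1) * spec_norm V ^ (r + 1)
      * (\<integral>\<delta>. \<bar>\<delta> ^ (r + 1)\<bar> \<partial>D (\<theta> i)) / fact (r + 1)" if "i \<le> r" for i
    using lower_bound_if_Suc_less_upto[OF assms(8,7) that]
    by (rule remainder_le_mitigable[OF assms(1-3,5,6)])
  ultimately show ?thesis by simp
qed

end
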